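(* Let $\alpha>0$, $\beta\geq0$, $q\in(0,\pi/2)$, and $m\geq 0$, and let $\{(u_n,v_n)\}\subset\mathcal{X}^0_{q,m}$ satisfy $E(u_n,v_n)\to E_{\min}(q,m)$ as $n\to\infty$. Write $u_n=\rho_ne^{i\theta_n}$. Then there exists $\delta>0$, independent of $n$, such that $\|\rho_n'\|_2>\delta$ for all sufficiently large $n$. In addition, if $m>0$, then $\|v_n\|_4>\delta$ for all sufficiently large $n$.
   Context: $\|\cdot\|_r$ denotes the $L^r(\mathbb{R})$ norm. $\mathcal{E}(\mathbb{R})=\{u\in H^1_{\mathrm{loc}}(\mathbb{R};\mathbb{C}): u'\in L^2,\ 1-|u|^2\in L^2(\mathbb{R})\}$, $\mathcal{NE}(\mathbb{R})=\{u\in\mathcal{E}(\mathbb{R}):|u|>0\}$; each $u\in\mathcal{NE}(\mathbb{R})$ has a lifting $u=\rho e^{i\theta}$, $\rho=|u|$, $\theta\in H^1_{\mathrm{loc}}$ real, $\theta'\in L^2$. Let $G(s)=s(2-s)$, $p(u)=\frac12\int_{\mathbb{R}}G(|1-\rho|)\theta'\,dx$. Let $\mathcal{X}=\{(u,v)\in\mathcal{NE}(\mathbb{R})\times H^1(\mathbb{R}):|u|<2\}$ ($v$ real-valued), $\mathcal{X}_{q,m}=\{(u,v)\in\mathcal{X}:p(u)=q,\ \|v\|_{2}^2=m\}$, and $\mathcal{X}^0_{q,m}$ the set of $(\rho e^{i\theta},v)\in\mathcal{X}_{q,m}$ such that $1-\rho$, $\theta'$ and $v$ are even, nonnegative, radially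 nonincreasing functions in $C_0^\infty(\mathbb{R})$. The energy is $E(u,v)=\int_{\mathbb{R}}\big(\tfrac12|u'|^2+\tfrac12(v')^2+\tfrac14(1-|u|^2)^2+\tfrac{\beta}{4}v^4-\tfrac{\alpha}{2}(1-|u|^2)v^2\big)dx$ and $E_{\min}(q,m)=\inf\{E(u,v):(u,v)\in\mathcal{X}_{q,m}\}$. *)

theory Defs
  imports "HOL-Analysis.Analysis"
begin

definition L2 :: "(real \<Rightarrow> 'a::{banach,second_countable_topology}) \<Rightarrow> bool" where
  "L2 f \<longleftrightarrow> f \<in> borel_measurable lborel \<and> integrable lborel (\<lambda>x. (norm (f x))^2)"

definition L2norm :: "(real \<Rightarrow> 'a::{banach,second_countable_topology}) \<Rightarrow> real" where
  "L2norm f = sqrt (LINT x|lborel. (norm (f x))^2)"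

definition L4norm :: "(real \<Rightarrow> real) \<Rightarrow> real" where
  "L4norm f = (LINT x|lborel. (f x)^4) powr (1/4)"

(* w is the weak derivative of u in H^1_loc(R): w is locally integrable and u is its
   (absolutely continuous representative) primitive *)
definition has_weak_deriv :: "(real \<Rightarrow> 'a::{banach,second_countable_topology}) \<Rightarrow> (real \<Rightarrow> 'a) \<Rightarrow> bool" where
  "has_weak_deriv u w \<longleftrightarrow>
     (\<forall>a b. set_integrable lborel {a..b} w) \<and>
     (\<forall>a b. a \<le> b \<longrightarrow> u b - u a = (LINT x:{a..b}|lborel. w x))"

definition H1loc :: "(real \<Rightarrow> 'a::{banach,second_countable_topology}) \<Rightarrow> bool" where
  "H1loc u \<longleftrightarrow> (\<exists>w. has_weak_deriv u w)"

(* a chosen weak derivative (unique a.e.) *)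
definition wderiv :: "(real \<Rightarrow> 'a::{banach,second_countable_topology}) \<Rightarrow> real \<Rightarrow> 'a" where
  "wderiv u = (SOME w. has_weak_deriv u w)"

definition H1 :: "(real \<Rightarrow> real) \<Rightarrow> bool" where
  "H1 v \<longleftrightarrow> L2 v \<and> (\<exists>w. has_weak_deriv v w \<and> L2 w)"

definition Espace :: "(real \<Rightarrow> complex) set" where
  "Espace = {u. \<exists>w. has_weak_deriv u w \<and> L2 w \<and> L2 (\<lambda>x. 1 - (cmod (u x))^2)}"

definition NEspace :: "(real \<Rightarrow> complex) set" where
  "NEspace = {u \<in> Espace. \<forall>x. u x \<noteq> 0}"

definition lifting :: "(real \<Rightarrow> complex) \<Rightarrow> (real \<Rightarrow> real) \<Rightarrow> bool" where
  "lifting u \<theta> \<longleftrightarrow> (\<forall>x. u x = complex_of_real (cmod (u x)) * cis (\<theta> x)) \<and>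
     (\<exists>w. has_weak_deriv \<theta> w \<and> L2 w)"

definition G :: "real \<Rightarrow> real" where
  "G s = s * (2 - s)"

definition momentum :: "(real \<Rightarrow> complex) \<Rightarrow> real" where
  "momentum u = (let \<theta> = (SOME \<theta>. lifting u \<theta>) in
     (1/2) * (LINT x|lborel. G \<bar>1 - cmod (u x)\<bar> * wderiv \<theta> x))"

definition Xspace :: "((real \<Rightarrow> complex) \<times> (real \<Rightarrow> real)) set" where
  "Xspace = {(u, v). u \<in> NEspace \<and> H1 v \<and> (\<forall>x. cmod (u x) < 2)}"

definition Xqm :: "real \<Rightarrow> real \<Rightarrow> ((real \<Rightarrow> complex) \<times> (real \<Rightarrow> real)) set" where
  "Xqm q m = {(u, v) \<in> Xspace. momentum u = q \<and> (L2norm v)^2 = m}"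

definition smooth_fun :: "(real \<Rightarrow> real) \<Rightarrow> bool" where
  "smooth_fun f \<longleftrightarrow> (\<forall>k x. ((deriv ^^ k) f) differentiable (at x))"

definition C0inf :: "(real \<Rightarrow> real) \<Rightarrow> bool" where
  "C0inf f \<longleftrightarrow> smooth_fun f \<and> (\<exists>R. \<forall>x. \<bar>x\<bar> > R \<longrightarrow> f x = 0)"

definition sym_dec :: "(real \<Rightarrow> real) \<Rightarrow> bool" where
  "sym_dec f \<longleftrightarrow> (\<forall>x. f (-x) = f x) \<and> (\<forall>x. 0 \<le> f x) \<and>
     (\<forall>x y. 0 \<le> x \<longrightarrow> x \<le> y \<longrightarrow> f y \<le> f x)"

definition X0qm :: "real \<Rightarrow> real \<Rightarrow> ((real \<Rightarrow> complex) \<times> (real \<Rightarrow> real)) set" where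
  "X0qm q m = {(u, v) \<in> Xqm q m.
     \<exists>\<theta> \<theta>'. (\<forall>x. u x = complex_of_real (cmod (u x)) * cis (\<theta> x)) \<and>
            (\<forall>x. (\<theta> has_real_derivative \<theta>' x) (at x)) \<and>
            C0inf (\<lambda>x. 1 - cmod (u x)) \<and> sym_dec (\<lambda>x. 1 - cmod (u x)) \<and>
            C0inf \<theta>' \<and> sym_dec \<theta>' \<and> C0inf v \<and> sym_dec v}"

definition energy :: "real \<Rightarrow> real \<Rightarrow> (real \<Rightarrow> complex) \<Rightarrow> (real \<Rightarrow> real) \<Rightarrow> real" where
  "energy \<alpha> \<beta> u v = (LINT x|lborel.
      (1/2) * (cmod (wderiv u x))^2 + (1/2) * (wderiv v x)^2
      + (1/4) * (1 - (cmod (u x))^2)^2 + (\<beta>/4) * (v x)^4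
      - (\<alpha>/2) * (1 - (cmod (u x))^2) * (v x)^2)"

definition Emin :: "real \<Rightarrow> real \<Rightarrow> real \<Rightarrow> real \<Rightarrow> ereal" where
  "Emin \<alpha> \<beta> q m = (INF uv \<in> Xqm q m. ereal (energy \<alpha> \<beta> (fst uv) (snd uv)))"

end

theory Submission
  imports Defs
begin

(* Near-minimizers are compared with explicit competitors. A shallow dip rho^2 = 1 - a g of the
   amplitude, with phase gradient theta' = b g for a rescaled bump g, plus a widely spread field v,
   has momentum q and energy below sqrt 2 q; hence E_min(q, m) < sqrt 2 q. Conversely, for
   (u, v) in X^0 the amplitude rho = |u| is smallest at 0, and AM-GM gives
   E(u, v) >= sqrt 2 rho(0) q - alpha (1 - rho(0)) m, so energies below a level c < sqrt 2 q force
   a dip 1 - rho(0) > s0 > 0. By the fundamental theorem of calculus such a dip costs a fixed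
   amount of ||rho'||_2, and it persists on an interval [-r0, r0]. If m > 0 and ||v||_4 were small,
   the coupling energy of v would be small, and moving the mass of v into the dip would lower the
   energy by a fixed amount, contradicting minimality. *)

lemma two_mult_le_weighted_squares:
  fixes t a b :: real
  assumes "0 < t"
  shows "2 * a * b \<le> t * a^2 + b^2 / t"
proof -
  have "0 \<le> (t * a - b)^2 / t" using assms by simp
  also have "(t * a - b)^2 / t = t * a^2 + b^2 / t - 2 * a * b"
    using assms by (simp add: power2_eq_square field_simps)
  finally show ?thesis by simp
qed

lemma has_real_derivative_max0_power2:
  fixes h :: "real \<Rightarrow> real"
  assumes deriv: "(h has_real_derivative h') (at x)"
  shows "((\<lambda>y. (max 0 (h y))^2) has_real_derivative 2 * max 0 (h x) * h') (at x)"
proof -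
  have lim: "(h \<longlongrightarrow> h x) (at x)" using DERIV_isCont[OF deriv] by (rule isContD)
  consider "0 < h x" | "h x < 0" | "h x = 0" by linarith
  then show ?thesis
  proof cases
    case 1
    have "\<forall>\<^sub>F y in at x. (max 0 (h y))^2 = (h y)^2"
      using order_tendstoD(1)[OF lim 1] by eventually_elim auto
    moreover have "((\<lambda>y. (h y)^2) has_real_derivative 2 * h x * h') (at x)"
      by (auto intro!: derivative_eq_intros deriv)
    ultimately show ?thesis using 1
      by (subst has_field_derivative_cong_eventually[where g = "\<lambda>y. (h y)^2"]) auto
  next
    case 2
    have "\<forall>\<^sub>F y in at x. (max 0 (h y))^2 = 0"
      using order_tendstoD(2)[OF lim 2] by eventually_elim auto
    then show ?thesis using 2
      by (subst has_field_derivative_cong_eventually[where g = "\<lambda>y. 0"]) auto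
  next
    case 3
    \<comment> \<open>the difference quotient is bounded by \<open>|h y - h x|\<close> times that of \<open>h\<close>\<close>
    have "((\<lambda>y. (h y - h x) / (y - x)) \<longlongrightarrow> h') (at x)"
      using deriv unfolding has_field_derivative_iff .
    then have "((\<lambda>y. \<bar>h y - h x\<bar> * \<bar>(h y - h x) / (y - x)\<bar>) \<longlongrightarrow> \<bar>h x - h x\<bar> * \<bar>h'\<bar>) (at x)"
      by (intro tendsto_intros lim)
    then have "((\<lambda>y. \<bar>h y - h x\<bar> * \<bar>(h y - h x) / (y - x)\<bar>) \<longlongrightarrow> 0) (at x)"
      by simp
    then have "((\<lambda>y. ((max 0 (h y))^2 - (max 0 (h x))^2) / (y - x)) \<longlongrightarrow> 0) (at x)"
    proof (rule Lim_null_comparison[rotated], intro always_eventually allI)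
      fix y
      have "(max 0 (h y))^2 \<le> (h y)^2"
        by (rule power_mono_even) auto
      then have "(max 0 (h y))^2 \<le> \<bar>h y\<bar> * \<bar>h y\<bar>"
        by (simp add: power2_eq_square)
      then show "norm (((max 0 (h y))^2 - (max 0 (h x))^2) / (y - x))
          \<le> \<bar>h y - h x\<bar> * \<bar>(h y - h x) / (y - x)\<bar>"
        using 3 by (simp add: abs_divide abs_mult divide_right_mono)
    qed
    then show ?thesis using 3 unfolding has_field_derivative_iff by simp
  qed
qed

lemma lborel_integral_rescale:
  fixes F :: "real \<Rightarrow> real"
  assumes "0 < L"
  shows "(LINT x|lborel. F ((x - D) / L)) = L * (LINT y|lborel. F y)"
  using lborel_integral_real_affine[of L "\<lambda>x. F ((x - D) / L)" D] assms by simp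

lemma integral_ge_const_on_interval:
  fixes h :: "real \<Rightarrow> real"
  assumes "integrable lborel h" and "\<And>x. 0 \<le> h x" and "a \<le> b" and "0 \<le> c"
    and "\<And>x. a \<le> x \<Longrightarrow> x \<le> b \<Longrightarrow> c \<le> h x"
  shows "c * (b - a) \<le> (LINT x|lborel. h x)"
proof -
  have "integrable lborel (\<lambda>x. indicator {a..b} x * c)"
    using borel_integrable_atLeastAtMost[of a b "\<lambda>x. c"] by (simp add: mult.commute)
  then have "(LINT x|lborel. indicator {a..b} x * c) \<le> (LINT x|lborel. h x)"
    using assms by (intro integral_mono) (auto simp: indicator_def)
  then show ?thesis using \<open>a \<le> b\<close> by (simp add: mult.commute)
qed

lemma has_real_derivative_integral_from_left_of_support:
  fixes g :: "real \<Rightarrow> real"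
  assumes cont: "continuous_on UNIV g" and zero: "\<And>x. x < a \<Longrightarrow> g x = 0"
  shows "((\<lambda>y. integral {a - 1..y} g) has_real_derivative g x) (at x)"
proof (cases "a - 1 < x")
  case True
  have "((\<lambda>y. integral {a - 1..y} g) has_real_derivative g x) (at x within {a - 1..x + 1})"
    using True continuous_on_subset[OF cont subset_UNIV] by (intro integral_has_real_derivative) auto
  moreover have "at x within {a - 1..x + 1} = at x"
    using True by (intro at_within_interior) simp
  ultimately show ?thesis by simp
next
  case False
  have vanish: "integral {a - 1..y} g = 0" if "y < a" for y
  proof -
    have "integral {a - 1..y} g = integral {a - 1..y} (\<lambda>_. 0)"
      using that zero by (intro integral_cong) auto
    then show ?thesis by simp
  qed
  have "\<forall>\<^sub>F y in at x. y < a"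
    using False by (intro order_tendstoD(2)[OF tendsto_ident_at]) simp
  then have "\<forall>\<^sub>F y in at x. integral {a - 1..y} g = 0"
    by (rule eventually_mono) (rule vanish)
  then have "((\<lambda>y. integral {a - 1..y} g) has_real_derivative 0) (at x)"
    using vanish[of x] False
    by (subst has_field_derivative_cong_eventually[where g = "\<lambda>_. 0"]) auto
  then show ?thesis using False zero[of x] by simp
qed

lemma powr_quarter_power4:
  fixes y :: real
  assumes "0 \<le> y"
  shows "(y powr (1/4)) ^ 4 = y"
  using powr_realpow'[of "y powr (1/4)" 4] assms by (simp add: powr_powr)

lemma L4norm_power4: "L4norm f ^ 4 = (LINT x|lborel. (f x)^4)"
  unfolding L4norm_def by (simp add: powr_quarter_power4)

lemma integrable_continuous_compact_support:
  fixes f :: "real \<Rightarrow> real"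
  assumes f: "continuous_on UNIV f" and supp: "\<And>x. R < \<bar>x\<bar> \<Longrightarrow> f x = 0"
  shows "integrable lborel f"
proof -
  have "integrable lborel (\<lambda>x. f x * indicator {-R..R} x)"
    by (rule borel_integrable_atLeastAtMost) (use f in \<open>auto simp: continuous_on_eq_continuous_at\<close>)
  also have "(\<lambda>x. f x * indicator {-R..R} x) = f"
    using supp by (force simp: indicator_def abs_le_iff)
  finally show ?thesis .
qed

lemma L2norm_power2: "L2norm f ^ 2 = (LINT x|lborel. (norm (f x))^2)"
  unfolding L2norm_def by simp

section \<open>Weak derivatives and liftings\<close>

lemma set_integral_eq_0_if_interval_integrals_eq_0:
  fixes g :: "real \<Rightarrow> 'a::{banach,second_countable_topology}"
  assumes g: "integrable lborel g" and total: "(LINT x|lborel. g x) = 0"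
    and intervals: "\<And>a b. a \<le> b \<Longrightarrow> (LINT x:{a..b}|lborel. g x) = 0"
    and A: "A \<in> sets borel"
  shows "(LINT x:A|lborel. g x) = 0"
  using A
proof (induction rule: borel_set_induct)
  case empty
  then show ?case by (simp add: set_lebesgue_integral_def)
next
  case (interval a b)
  then show ?case by (rule intervals)
next
  case (compl A)
  have "integrable lborel (\<lambda>x. indicator A x *\<^sub>R g x)"
    using g compl.hyps by (simp add: integrable_mult_indicator)
  moreover have "(\<lambda>x. indicator (-A) x *\<^sub>R g x) = (\<lambda>x. g x - indicator A x *\<^sub>R g x)"
    by (auto split: split_indicator)
  ultimately show ?case
    using g total compl.IH by (simp add: set_lebesgue_integral_def)
next
  case (union f)
  have "(LINT x:(\<Union>i. f i)|lborel. g x) = (\<Sum>i. (LINT x:(f i)|lborel. g x))"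
    using union g integrable_mult_indicator[of "\<Union>i. f i" lborel g]
    by (intro lebesgue_integral_countable_add) (auto simp: disjoint_family_on_def set_integrable_def)
  then show ?case using union.IH by simp
qed

lemma AE_eq_0_if_interval_integrals_eq_0:
  fixes h :: "real \<Rightarrow> 'a::{banach,second_countable_topology}"
  assumes int: "\<And>a b. set_integrable lborel {a..b} h"
    and zero: "\<And>a b. a \<le> b \<Longrightarrow> (LINT x:{a..b}|lborel. h x) = 0"
  shows "AE x in lborel. h x = 0"
proof -
  have truncated: "AE x in lborel. indicator {-real N..real N} x *\<^sub>R h x = 0" for N :: nat
  proof (rule sigma_finite_measure.density_zero[OF sigma_finite_lborel])
    let ?g = "\<lambda>x. indicator {-real N..real N} x *\<^sub>R h x"
    have interval: "(LINT x:{a..b}|lborel. ?g x) = 0" for a b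
    proof -
      have "(LINT x:{a..b}|lborel. ?g x) = (LINT x:{max a (-real N)..min b (real N)}|lborel. h x)"
        unfolding set_lebesgue_integral_def
        by (intro Bochner_Integration.integral_cong) (auto split: split_indicator)
      then show ?thesis
        using zero by (cases "max a (-real N) \<le> min b (real N)") (auto simp: set_lebesgue_integral_def)
    qed
    show g: "integrable lborel ?g"
      using int[of "-real N" "real N"] unfolding set_integrable_def .
    have "(LINT x|lborel. ?g x) = (LINT x:{-real N..real N}|lborel. h x)"
      by (simp add: set_lebesgue_integral_def)
    then have "(LINT x|lborel. ?g x) = 0" using zero[of "-real N" "real N"] by simp
    then show "set_lebesgue_integral lborel A ?g = 0" if "A \<in> sets lborel" for A
      using set_integral_eq_0_if_interval_integrals_eq_0[OF g _ interval] that by simp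
  qed
  have "AE x in lborel. \<forall>N::nat. indicator {-real N..real N} x *\<^sub>R h x = 0"
    using truncated by (subst AE_all_countable) blast
  then show ?thesis
  proof (rule eventually_mono)
    fix x assume "\<forall>N::nat. indicator {-real N..real N} x *\<^sub>R h x = 0"
    moreover obtain N :: nat where "\<bar>x\<bar> \<le> real N" using real_arch_simple by blast
    ultimately show "h x = 0" by (auto dest: spec[of _ N] simp: indicator_def abs_le_iff)
  qed
qed

lemma borel_measurable_if_interval_integrable:
  fixes w :: "real \<Rightarrow> 'a::{banach,second_countable_topology}"
  assumes "\<And>a b. set_integrable lborel {a..b} w"
  shows "w \<in> borel_measurable lborel"
proof (rule borel_measurable_LIMSEQ_metric)
  fix i :: nat
  show "(\<lambda>x. indicator {-real i..real i} x *\<^sub>R w x) \<in> borel_measurable lborel"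
    using assms[of "-real i" "real i"] unfolding set_integrable_def by (rule borel_measurable_integrable)
next
  fix x :: real
  obtain N :: nat where N: "\<bar>x\<bar> \<le> real N" using real_arch_simple by blast
  have "\<forall>\<^sub>F i in sequentially. indicator {-real i..real i} x *\<^sub>R w x = w x"
    unfolding eventually_sequentially
    by (rule exI[of _ N]) (use N in \<open>auto simp: indicator_def abs_le_iff\<close>)
  then show "(\<lambda>i. indicator {-real i..real i} x *\<^sub>R w x) \<longlonglongrightarrow> w x"
    by (rule tendsto_eventually)
qed

lemma has_weak_deriv_AE_unique:
  fixes f w1 w2 :: "real \<Rightarrow> 'a::{banach,second_countable_topology}"
  assumes "has_weak_deriv f w1" and "has_weak_deriv f w2"
  shows "AE x in lborel. w1 x = w2 x"
proof -
  have "AE x in lborel. w1 x - w2 x = 0"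
    using assms unfolding has_weak_deriv_def
    by (intro AE_eq_0_if_interval_integrals_eq_0) (auto simp: set_integral_diff)
  then show ?thesis by simp
qed

lemma has_weak_deriv_wderiv: "has_weak_deriv f w \<Longrightarrow> has_weak_deriv f (wderiv f)"
  unfolding wderiv_def by (rule someI[of "has_weak_deriv f"])

lemma has_weak_deriv_C1:
  fixes f f' :: "real \<Rightarrow> 'a::euclidean_space"
  assumes deriv: "\<And>x. (f has_vector_derivative f' x) (at x)" and cont: "continuous_on UNIV f'"
  shows "has_weak_deriv f f'"
  unfolding has_weak_deriv_def
proof (intro conjI allI impI)
  fix a b :: real
  show "set_integrable lborel {a..b} f'"
    by (rule borel_integrable_atLeastAtMost') (rule continuous_on_subset[OF cont], simp)
  assume "a \<le> b"
  then show "f b - f a = (LINT x:{a..b}|lborel. f' x)"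
    unfolding set_lebesgue_integral_def using deriv cont
    by (intro integral_FTC_atLeastAtMost[symmetric])
       (auto intro: has_vector_derivative_at_within continuous_on_subset)
qed

lemma has_weak_deriv_real_C1:
  fixes f f' :: "real \<Rightarrow> real"
  assumes "\<And>x. (f has_real_derivative f' x) (at x)" and "continuous_on UNIV f'"
  shows "has_weak_deriv f f'"
  using assms by (intro has_weak_deriv_C1) (auto simp: has_real_derivative_iff_has_vector_derivative)

lemma continuous_if_has_weak_deriv:
  fixes f w :: "real \<Rightarrow> 'a::euclidean_space"
  assumes "has_weak_deriv f w"
  shows "continuous_on UNIV f"
proof -
  have "isCont f x0" for x0
  proof -
    let ?a = "x0 - 1" and ?b = "x0 + 1"
    have "w integrable_on {?a..?b}"
      using assms set_borel_integral_eq_integral(1) unfolding has_weak_deriv_def by blast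
    then have "continuous_on {?a..?b} (\<lambda>y. f ?a + integral {?a..y} w)"
      by (intro continuous_intros indefinite_integral_continuous_1)
    moreover have "f ?a + integral {?a..y} w = f y" if "y \<in> {?a..?b}" for y
      using assms that set_borel_integral_eq_integral(2)[of "{?a..y}" w] unfolding has_weak_deriv_def
      by (metis atLeastAtMost_iff add.commute diff_add_cancel)
    ultimately have "continuous_on {?a..?b} f"
      using continuous_on_eq by blast
    then show ?thesis
      by (rule continuous_on_interior) simp
  qed
  then show ?thesis by (simp add: continuous_at_imp_continuous_on)
qed

lemma continuous_cis_eq_imp_diff_const:
  fixes \<theta>1 \<theta>2 :: "real \<Rightarrow> real"
  assumes "continuous_on UNIV \<theta>1" and "continuous_on UNIV \<theta>2"
    and cis_eq: "\<And>x. cis (\<theta>1 x) = cis (\<theta>2 x)"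
  obtains c where "\<And>x. \<theta>1 x = \<theta>2 x + c"
proof -
  define d where "d = (\<lambda>x. (\<theta>1 x - \<theta>2 x) / (2 * pi))"
  have d_int: "d x \<in> \<int>" for x
  proof -
    have "sin (\<theta>1 x) = sin (\<theta>2 x) \<and> cos (\<theta>1 x) = cos (\<theta>2 x)"
      using cis_eq[of x] by (metis cis.sel)
    then obtain n :: int where "\<theta>1 x = \<theta>2 x + 2 * pi * n"
      using sin_cos_eq_iff by blast
    then show ?thesis unfolding d_def by simp
  qed
  have "d constant_on UNIV"
  proof (rule continuous_discrete_range_constant)
    show "continuous_on UNIV d" unfolding d_def using assms(1,2) by (intro continuous_intros) auto
    show "\<exists>e>0. \<forall>y. y \<in> UNIV \<and> d y \<noteq> d x \<longrightarrow> e \<le> norm (d y - d x)" for x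
    proof (intro exI[of _ 1] conjI allI impI)
      fix y assume "y \<in> UNIV \<and> d y \<noteq> d x"
      moreover obtain k where "d y = of_int k" using d_int[of y] Ints_cases by blast
      moreover obtain l where "d x = of_int l" using d_int[of x] Ints_cases by blast
      ultimately show "1 \<le> norm (d y - d x)"
        by (auto simp: of_int_diff[symmetric] simp del: of_int_diff)
    qed simp
  qed simp
  then obtain k where "\<And>x. d x = k" unfolding constant_on_def by blast
  then show ?thesis
    using that[of "2 * pi * k"] unfolding d_def by (simp add: field_simps)
qed

section \<open>Smooth compactly supported profiles\<close>

text \<open>The energy density in polar coordinates \<open>u = \<rho> e\<^sup>i\<^sup>\<theta>\<close>, where \<open>|u'|\<^sup>2 = \<rho>'\<^sup>2 + \<rho>\<^sup>2\<theta>'\<^sup>2\<close>.\<close>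

definition energy_density_u :: "real \<Rightarrow> real \<Rightarrow> real \<Rightarrow> real" where
  "energy_density_u r r' t' = (1/2) * (r'^2 + (r * t')^2) + (1/4) * (1 - r^2)^2"

definition energy_density_v :: "real \<Rightarrow> real \<Rightarrow> real \<Rightarrow> real \<Rightarrow> real \<Rightarrow> real" where
  "energy_density_v \<alpha> \<beta> r w w' = (1/2) * w'^2 + (\<beta>/4) * w^4 - (\<alpha>/2) * (1 - r^2) * w^2"

definition energy_density :: "real \<Rightarrow> real \<Rightarrow> real \<Rightarrow> real \<Rightarrow> real \<Rightarrow> real \<Rightarrow> real \<Rightarrow> real" where
  "energy_density \<alpha> \<beta> r r' t' w w' = energy_density_u r r' t' + energy_density_v \<alpha> \<beta> r w w'"

locale profile =
  fixes \<rho> \<rho>' \<theta>' v v' :: "real \<Rightarrow> real"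
  assumes \<rho>_deriv: "\<And>x. (\<rho> has_real_derivative \<rho>' x) (at x)"
    and v_deriv: "\<And>x. (v has_real_derivative v' x) (at x)"
    and \<rho>'_cont: "continuous_on UNIV \<rho>'" and \<theta>'_cont: "continuous_on UNIV \<theta>'"
    and v'_cont: "continuous_on UNIV v'"
    and \<rho>_pos: "\<And>x. 0 < \<rho> x" and \<rho>_le_1: "\<And>x. \<rho> x \<le> 1" and \<theta>'_nonneg: "\<And>x. 0 \<le> \<theta>' x"
    and compact_support: "\<exists>R. \<forall>x. R < \<bar>x\<bar> \<longrightarrow> \<rho> x = 1 \<and> \<rho>' x = 0 \<and> \<theta>' x = 0 \<and> v x = 0 \<and> v' x = 0"
begin

lemma \<rho>_cont: "continuous_on UNIV \<rho>"
  using \<rho>_deriv by (meson DERIV_continuous continuous_at_imp_continuous_on)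

lemma v_cont: "continuous_on UNIV v"
  using v_deriv by (meson DERIV_continuous continuous_at_imp_continuous_on)

lemma one_minus_\<rho>_bounds: "0 \<le> 1 - \<rho> x" "1 - \<rho> x \<le> 1 - (\<rho> x)^2" "1 - (\<rho> x)^2 \<le> 1"
  using \<rho>_pos[of x] \<rho>_le_1[of x] by (auto simp: power2_eq_square mult_left_le)

lemma integrable_if_trivial_outside:
  fixes f :: "real \<Rightarrow> real"
  assumes "continuous_on UNIV f"
    and "\<And>x. \<rho> x = 1 \<Longrightarrow> \<rho>' x = 0 \<Longrightarrow> \<theta>' x = 0 \<Longrightarrow> v x = 0 \<Longrightarrow> v' x = 0 \<Longrightarrow> f x = 0"
  shows "integrable lborel f"
proof -
  obtain R where R: "\<And>x. R < \<bar>x\<bar> \<Longrightarrow> \<rho> x = 1 \<and> \<rho>' x = 0 \<and> \<theta>' x = 0 \<and> v x = 0 \<and> v' x = 0"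
    using compact_support by blast
  show ?thesis
    by (rule integrable_continuous_compact_support[where R = R]) (use assms R in auto)
qed

lemma L2_if_trivial_outside:
  fixes f :: "real \<Rightarrow> real"
  assumes "continuous_on UNIV f"
    and "\<And>x. \<rho> x = 1 \<Longrightarrow> \<rho>' x = 0 \<Longrightarrow> \<theta>' x = 0 \<Longrightarrow> v x = 0 \<Longrightarrow> v' x = 0 \<Longrightarrow> f x = 0"
  shows "L2 f"
  unfolding L2_def using assms borel_measurable_continuous_onI
  by (auto intro!: integrable_if_trivial_outside continuous_intros)

lemmas profile_cont = \<rho>_cont \<rho>'_cont \<theta>'_cont v_cont v'_cont

lemma integrable_profile_terms:
  "integrable lborel (\<lambda>x. energy_density_u (\<rho> x) (\<rho>' x) (\<theta>' x))"
  "integrable lborel (\<lambda>x. energy_density_v \<alpha> \<beta> (\<rho> x) (v x) (v' x))"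
  "integrable lborel (\<lambda>x. (1 - (\<rho> x)^2) * \<theta>' x)"
  "integrable lborel (\<lambda>x. (1 - (\<rho> x)^2) * (v x)^2)"
  "integrable lborel (\<lambda>x. (1 - (\<rho> x)^2)^2)"
  "integrable lborel (\<lambda>x. (\<rho>' x)^2)"
  "integrable lborel (\<lambda>x. (v x)^2)"
  "integrable lborel (\<lambda>x. (v x)^4)"
  "integrable lborel (\<lambda>x. (v' x)^2)"
  unfolding energy_density_u_def energy_density_v_def
  by (rule integrable_if_trivial_outside; auto intro!: continuous_intros profile_cont)+

lemma integrable_energy_density:
  "integrable lborel (\<lambda>x. energy_density \<alpha> \<beta> (\<rho> x) (\<rho>' x) (\<theta>' x) (v x) (v' x))"
  unfolding energy_density_def using integrable_profile_terms(1,2) by simp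

lemma integral_energy_density_split:
  "(LINT x|lborel. energy_density \<alpha> \<beta> (\<rho> x) (\<rho>' x) (\<theta>' x) (v x) (v' x))
    = (LINT x|lborel. energy_density_u (\<rho> x) (\<rho>' x) (\<theta>' x))
      + (LINT x|lborel. energy_density_v \<alpha> \<beta> (\<rho> x) (v x) (v' x))"
  unfolding energy_density_def using integrable_profile_terms(1,2) by simp

lemma integral_energy_density_v:
  "(LINT x|lborel. energy_density_v \<alpha> \<beta> (\<rho> x) (v x) (v' x))
    = (1/2) * (LINT x|lborel. (v' x)^2) + (\<beta>/4) * (LINT x|lborel. (v x)^4)
      - (\<alpha>/2) * (LINT x|lborel. (1 - (\<rho> x)^2) * (v x)^2)"
  unfolding energy_density_v_def using integrable_profile_terms(4,8,9)
  by (simp add: mult.assoc)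

lemma integral_energy_density_v_le:
  assumes "0 \<le> \<alpha>"
  shows "(LINT x|lborel. energy_density_v \<alpha> \<beta> (\<rho> x) (v x) (v' x))
    \<le> (1/2) * (LINT x|lborel. (v' x)^2) + (\<beta>/4) * (LINT x|lborel. (v x)^4)"
proof -
  have "0 \<le> (LINT x|lborel. (1 - (\<rho> x)^2) * (v x)^2)"
    using order_trans[OF one_minus_\<rho>_bounds(1,2)] by (intro integral_nonneg_AE AE_I2) simp
  then show ?thesis
    unfolding integral_energy_density_v using assms by simp
qed

end

locale lifted_profile = profile +
  fixes \<theta> :: "real \<Rightarrow> real" and u :: "real \<Rightarrow> complex"
  assumes \<theta>_deriv: "\<And>x. (\<theta> has_real_derivative \<theta>' x) (at x)"
    and lifting: "\<And>x. u x = complex_of_real (\<rho> x) * cis (\<theta> x)"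
begin

lemma norm_u: "cmod (u x) = \<rho> x"
  using \<rho>_pos[of x] by (simp add: lifting norm_mult)

definition u' :: "real \<Rightarrow> complex" where
  "u' x = (complex_of_real (\<rho>' x) + \<i> * complex_of_real (\<rho> x * \<theta>' x)) * cis (\<theta> x)"

lemma u_deriv: "(u has_vector_derivative u' x) (at x)"
proof -
  have \<rho>: "((\<lambda>x. complex_of_real (\<rho> x)) has_vector_derivative complex_of_real (\<rho>' x)) (at x)"
    using \<rho>_deriv[of x]
    by (simp add: has_vector_derivative_of_real has_real_derivative_iff_has_vector_derivative)
  have cis: "((\<lambda>x. cis (\<theta> x)) has_vector_derivative \<theta>' x *\<^sub>R (\<i> * cis (\<theta> x))) (at x)"
    using has_derivative_cis[OF \<theta>_deriv[of x, unfolded has_field_derivative_def]]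
    unfolding has_vector_derivative_def by (simp add: mult.commute)
  have "u = (\<lambda>x. complex_of_real (\<rho> x) * cis (\<theta> x))"
    using lifting by blast
  then show ?thesis
    using has_vector_derivative_mult[OF \<rho> cis]
    by (simp add: u'_def scaleR_conv_of_real algebra_simps)
qed

lemma \<theta>_cont: "continuous_on UNIV \<theta>"
  using \<theta>_deriv by (meson DERIV_continuous continuous_at_imp_continuous_on)

lemma u'_cont: "continuous_on UNIV u'"
  unfolding u'_def using profile_cont \<theta>_cont by (intro continuous_intros) auto

lemma norm_u'_power2: "(cmod (u' x))^2 = (\<rho>' x)^2 + (\<rho> x * \<theta>' x)^2"
  unfolding u'_def norm_mult by (simp add: cmod_power2)

lemma has_weak_deriv_u: "has_weak_deriv u u'"
  using u_deriv u'_cont by (rule has_weak_deriv_C1)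

lemma has_weak_deriv_v: "has_weak_deriv v v'"
  using v_deriv v'_cont by (rule has_weak_deriv_real_C1)

lemma in_Xspace: "(u, v) \<in> Xspace"
proof -
  have "L2 u'"
    unfolding L2_def norm_u'_power2
    using borel_measurable_continuous_onI[OF u'_cont]
    by (auto intro!: integrable_if_trivial_outside continuous_intros profile_cont)
  moreover have "L2 (\<lambda>x. 1 - (cmod (u x))^2)" "L2 v" "L2 v'"
    unfolding norm_u by (auto intro!: L2_if_trivial_outside continuous_intros profile_cont)
  moreover have "u x \<noteq> 0" "cmod (u x) < 2" for x
    using \<rho>_pos[of x] \<rho>_le_1[of x] norm_u[of x] by auto
  ultimately show ?thesis
    using has_weak_deriv_u has_weak_deriv_v
    unfolding Xspace_def NEspace_def Espace_def H1_def by blast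
qed

text \<open>The momentum is computed from whatever lifting \<open>SOME\<close> picks: any two continuous liftings
  differ by a constant, so their weak derivatives agree a.e. with \<open>\<theta>'\<close>.\<close>

lemma momentum_eq: "momentum u = (1/2) * (LINT x|lborel. (1 - (\<rho> x)^2) * \<theta>' x)"
proof -
  define \<theta>0 where "\<theta>0 = (SOME \<theta>. lifting u \<theta>)"
  have "has_weak_deriv \<theta> \<theta>'"
    using \<theta>_deriv \<theta>'_cont by (rule has_weak_deriv_real_C1)
  moreover have "L2 \<theta>'"
    by (auto intro!: L2_if_trivial_outside \<theta>'_cont)
  ultimately have "lifting u \<theta>"
    unfolding lifting_def using lifting norm_u by auto
  then have "lifting u \<theta>0"
    unfolding \<theta>0_def by (rule someI[of "lifting u"])
  then have \<theta>0: "has_weak_deriv \<theta>0 (wderiv \<theta>0)" and cis_eq: "\<And>x. cis (\<theta>0 x) = cis (\<theta> x)"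
    unfolding lifting_def using lifting norm_u \<rho>_pos
    by (auto intro: has_weak_deriv_wderiv) (metis mult_cancel_left of_real_eq_0_iff less_irrefl)
  obtain c where "\<And>x. \<theta>0 x = \<theta> x + c"
    using continuous_cis_eq_imp_diff_const[OF continuous_if_has_weak_deriv[OF \<theta>0] \<theta>_cont cis_eq]
    by blast
  then have "has_weak_deriv \<theta> (wderiv \<theta>0)"
    using \<theta>0 unfolding has_weak_deriv_def by simp
  then have ae: "AE x in lborel. wderiv \<theta>0 x = \<theta>' x"
    using \<open>has_weak_deriv \<theta> \<theta>'\<close> by (rule has_weak_deriv_AE_unique)
  have G: "G \<bar>1 - \<rho> x\<bar> = 1 - (\<rho> x)^2" for x
    using \<rho>_le_1[of x] unfolding G_def by (simp add: power2_eq_square algebra_simps)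
  have "(LINT x|lborel. G \<bar>1 - cmod (u x)\<bar> * wderiv \<theta>0 x) = (LINT x|lborel. (1 - (\<rho> x)^2) * \<theta>' x)"
    using ae borel_measurable_if_interval_integrable[of "wderiv \<theta>0"] \<theta>0
      borel_measurable_continuous_onI[OF \<rho>_cont] borel_measurable_continuous_onI[OF \<theta>'_cont]
    unfolding norm_u G has_weak_deriv_def
    by (intro integral_cong_AE) auto
  then show ?thesis
    unfolding momentum_def Let_def \<theta>0_def[symmetric] by simp
qed

lemma in_Xqm_iff:
  "(u, v) \<in> Xqm q m \<longleftrightarrow>
     (1/2) * (LINT x|lborel. (1 - (\<rho> x)^2) * \<theta>' x) = q \<and> (LINT x|lborel. (v x)^2) = m"
  using in_Xspace momentum_eq L2norm_power2[of v] unfolding Xqm_def by auto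

lemma energy_eq:
  "energy \<alpha> \<beta> u v = (LINT x|lborel. energy_density \<alpha> \<beta> (\<rho> x) (\<rho>' x) (\<theta>' x) (v x) (v' x))"
proof -
  have wu: "has_weak_deriv u (wderiv u)" and wv: "has_weak_deriv v (wderiv v)"
    using has_weak_deriv_u has_weak_deriv_v by (auto intro: has_weak_deriv_wderiv)
  then have "AE x in lborel. wderiv u x = u' x" "AE x in lborel. wderiv v x = v' x"
    using has_weak_deriv_u has_weak_deriv_v by (auto intro: has_weak_deriv_AE_unique)
  moreover have [measurable]: "wderiv u \<in> borel_measurable lborel" "wderiv v \<in> borel_measurable lborel"
    using wu wv by (metis borel_measurable_if_interval_integrable has_weak_deriv_def)+
  moreover have [measurable]: "\<rho> \<in> borel_measurable lborel" "\<rho>' \<in> borel_measurable lborel"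
    "\<theta>' \<in> borel_measurable lborel" "v \<in> borel_measurable lborel" "v' \<in> borel_measurable lborel"
    using profile_cont by (auto intro: borel_measurable_continuous_onI)
  ultimately show ?thesis
    unfolding energy_def norm_u
    by (intro integral_cong_AE)
       (auto simp: energy_density_def energy_density_u_def energy_density_v_def norm_u'_power2
             elim!: eventually_mono[OF AE_conjI])
qed


lemma replace_field:
  assumes "\<And>x. (w has_real_derivative w' x) (at x)" and "continuous_on UNIV w'"
    and "\<exists>R. \<forall>x. R < \<bar>x\<bar> \<longrightarrow> w x = 0 \<and> w' x = 0"
  shows "lifted_profile \<rho> \<rho>' \<theta>' w w' \<theta> u"
proof unfold_locales
  obtain R1 R2 where "\<forall>x. R1 < \<bar>x\<bar> \<longrightarrow> \<rho> x = 1 \<and> \<rho>' x = 0 \<and> \<theta>' x = 0 \<and> v x = 0 \<and> v' x = 0"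
    "\<forall>x. R2 < \<bar>x\<bar> \<longrightarrow> w x = 0 \<and> w' x = 0"
    using compact_support assms(3) by blast
  then show "\<exists>R. \<forall>x. R < \<bar>x\<bar> \<longrightarrow> \<rho> x = 1 \<and> \<rho>' x = 0 \<and> \<theta>' x = 0 \<and> w x = 0 \<and> w' x = 0"
    by (intro exI[of _ "max R1 R2"]) auto
qed (use \<rho>_deriv \<rho>'_cont \<theta>'_cont \<rho>_pos \<rho>_le_1 \<theta>'_nonneg \<theta>_deriv lifting assms in auto)
end

section \<open>Energy estimates for profiles\<close>

lemma energy_density_ge_momentum_density:
  fixes r r' t w w' :: real
  assumes "0 \<le> r\<^sub>0" "r\<^sub>0 \<le> r" "r \<le> 1" "0 \<le> t" "0 \<le> \<alpha>" "0 \<le> \<beta>"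
  shows "sqrt 2 / 2 * r\<^sub>0 * ((1 - r^2) * t) - \<alpha> * (1 - r\<^sub>0) * w^2 \<le> energy_density \<alpha> \<beta> r r' t w w'"
proof -
  have "r^2 \<le> 1" using assms by (intro power_le_one) auto
  then have "0 \<le> 1 - r^2" by simp
  then have "r\<^sub>0 * (t * (1 - r^2)) \<le> r * (t * (1 - r^2))"
    using assms by (intro mult_right_mono) auto
  then have "sqrt 2 / 2 * (r\<^sub>0 * (t * (1 - r^2))) \<le> sqrt 2 / 2 * (r * (t * (1 - r^2)))"
    by (rule mult_left_mono) simp
  then have momentum: "sqrt 2 / 2 * r\<^sub>0 * ((1 - r^2) * t) \<le> sqrt 2 / 2 * (r * t * (1 - r^2))"
    by (simp add: mult_ac)
  have "0 \<le> (r * t - sqrt 2 / 2 * (1 - r^2))^2" by simp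
  also have "\<dots> = (r * t)^2 - sqrt 2 * (r * t * (1 - r^2)) + (sqrt 2 * sqrt 2) / 4 * (1 - r^2)^2"
    by (simp add: power2_eq_square field_simps)
  finally have amgm: "sqrt 2 / 2 * (r * t * (1 - r^2)) \<le> (1/2) * (r * t)^2 + (1/4) * (1 - r^2)^2"
    by simp
  have "1 - r^2 = (1 - r) * (1 + r)" by (simp add: power2_eq_square algebra_simps)
  also have "\<dots> \<le> (1 - r) * 2"
    using assms by (intro mult_left_mono) auto
  also have "\<dots> \<le> 2 * (1 - r\<^sub>0)" using assms by simp
  finally have "(\<alpha>/2) * ((1 - r^2) * w^2) \<le> (\<alpha>/2) * (2 * (1 - r\<^sub>0) * w^2)"
    using assms by (intro mult_left_mono mult_right_mono) auto
  then have coupling: "(\<alpha>/2) * (1 - r^2) * w^2 \<le> \<alpha> * (1 - r\<^sub>0) * w^2"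
    by (simp add: algebra_simps)
  have "0 \<le> (1/2) * r'^2 + (1/2) * w'^2 + (\<beta>/4) * w^4"
    using assms by simp
  moreover have "energy_density \<alpha> \<beta> r r' t w w' = ((1/2) * r'^2 + (1/2) * w'^2 + (\<beta>/4) * w^4)
      + ((1/2) * (r * t)^2 + (1/4) * (1 - r^2)^2) - (\<alpha>/2) * (1 - r^2) * w^2"
    unfolding energy_density_def energy_density_u_def energy_density_v_def by (simp add: algebra_simps)
  ultimately show ?thesis
    using momentum amgm coupling by argo
qed

context profile
begin

lemma energy_ge_momentum_bound:
  assumes "0 \<le> \<alpha>" and "0 \<le> \<beta>" and \<rho>_min: "\<And>x. \<rho> 0 \<le> \<rho> x"
  shows "sqrt 2 * \<rho> 0 * ((1/2) * (LINT x|lborel. (1 - (\<rho> x)^2) * \<theta>' x))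
           - \<alpha> * (1 - \<rho> 0) * (LINT x|lborel. (v x)^2)
         \<le> (LINT x|lborel. energy_density \<alpha> \<beta> (\<rho> x) (\<rho>' x) (\<theta>' x) (v x) (v' x))"
proof -
  have "(LINT x|lborel. sqrt 2 / 2 * \<rho> 0 * ((1 - (\<rho> x)^2) * \<theta>' x) - \<alpha> * (1 - \<rho> 0) * (v x)^2)
      \<le> (LINT x|lborel. energy_density \<alpha> \<beta> (\<rho> x) (\<rho>' x) (\<theta>' x) (v x) (v' x))"
    using integrable_profile_terms(3,7) integrable_energy_density assms \<rho>_pos \<rho>_le_1 \<theta>'_nonneg
    by (intro integral_mono energy_density_ge_momentum_density) (auto intro: less_imp_le)
  then show ?thesis
    using integrable_profile_terms(3,7) by simp
qed

lemma energy_bounds_potential_and_gradient: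
  assumes "0 \<le> \<alpha>" and "0 \<le> \<beta>"
  defines "E \<equiv> (LINT x|lborel. energy_density \<alpha> \<beta> (\<rho> x) (\<rho>' x) (\<theta>' x) (v x) (v' x))"
  shows "(1/4) * (LINT x|lborel. (1 - (\<rho> x)^2)^2) \<le> E + (\<alpha>/2) * (LINT x|lborel. (v x)^2)"
    and "(1/2) * (LINT x|lborel. (\<rho>' x)^2) \<le> E + (\<alpha>/2) * (LINT x|lborel. (v x)^2)"
proof -
  have "(\<alpha>/2) * ((1 - (\<rho> x)^2) * (v x)^2) \<le> (\<alpha>/2) * (v x)^2" for x
    using \<open>0 \<le> \<alpha>\<close> mult_right_mono[OF one_minus_\<rho>_bounds(3)[of x], of "(v x)^2"]
    by (intro mult_left_mono) auto
  then have pointwise: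
    "(1/4) * (1 - (\<rho> x)^2)^2 - (\<alpha>/2) * (v x)^2 \<le> energy_density \<alpha> \<beta> (\<rho> x) (\<rho>' x) (\<theta>' x) (v x) (v' x)"
    "(1/2) * (\<rho>' x)^2 - (\<alpha>/2) * (v x)^2 \<le> energy_density \<alpha> \<beta> (\<rho> x) (\<rho>' x) (\<theta>' x) (v x) (v' x)" for x
    using \<open>0 \<le> \<beta>\<close> mult_nonneg_nonneg[of "\<beta>/4" "(v x)^4"]
    unfolding energy_density_def energy_density_u_def energy_density_v_def
    by (fastforce simp: algebra_simps)+
  have "(LINT x|lborel. (1/4) * (1 - (\<rho> x)^2)^2 - (\<alpha>/2) * (v x)^2) \<le> E"
    unfolding E_def using integrable_profile_terms(5,7) integrable_energy_density pointwise(1)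
    by (intro integral_mono) auto
  then show "(1/4) * (LINT x|lborel. (1 - (\<rho> x)^2)^2) \<le> E + (\<alpha>/2) * (LINT x|lborel. (v x)^2)"
    using integrable_profile_terms(5,7) by simp
  have "(LINT x|lborel. (1/2) * (\<rho>' x)^2 - (\<alpha>/2) * (v x)^2) \<le> E"
    unfolding E_def using integrable_profile_terms(6,7) integrable_energy_density pointwise(2)
    by (intro integral_mono) auto
  then show "(1/2) * (LINT x|lborel. (\<rho>' x)^2) \<le> E + (\<alpha>/2) * (LINT x|lborel. (v x)^2)"
    using integrable_profile_terms(6,7) by simp
qed

text \<open>Both dip bounds come from the fundamental theorem of calculus: for \<open>(1 - \<rho>)\<^sup>2\<close> on \<open>[0, b]\<close>
  with \<open>b\<close> outside the support, and for \<open>\<rho>\<close> on \<open>[0, r]\<close>.\<close>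

lemma dip_power2_le:
  assumes "0 < t"
  shows "(1 - \<rho> 0)^2 \<le> t * (LINT x|lborel. (1 - (\<rho> x)^2)^2) + (1/t) * (LINT x|lborel. (\<rho>' x)^2)"
proof -
  obtain R where R: "\<And>x. R < \<bar>x\<bar> \<Longrightarrow> \<rho> x = 1"
    using compact_support by blast
  define b where "b = \<bar>R\<bar> + 1"
  define F where "F = (\<lambda>x. 2 * (1 - \<rho> x) * \<rho>' x)"
  have b: "0 \<le> b" "\<rho> b = 1" using R[of b] unfolding b_def by auto
  have cont: "continuous_on {0..b} F"
    unfolding F_def using profile_cont by (auto intro!: continuous_intros intro: continuous_on_subset)
  have "(LINT x|lborel. indicator {0..b} x *\<^sub>R (- F x)) = (1 - \<rho> b)^2 - (1 - \<rho> 0)^2"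
  proof (rule integral_FTC_atLeastAtMost[OF b(1)])
    fix x
    have "((\<lambda>x. (1 - \<rho> x)^2) has_real_derivative - F x) (at x)"
      unfolding F_def by (auto intro!: derivative_eq_intros \<rho>_deriv simp: algebra_simps)
    then show "((\<lambda>x. (1 - \<rho> x)^2) has_vector_derivative - F x) (at x within {0..b})"
      by (auto simp: has_real_derivative_iff_has_vector_derivative intro: has_vector_derivative_at_within)
  qed (use cont in \<open>auto intro!: continuous_intros\<close>)
  then have "(1 - \<rho> 0)^2 = (LINT x|lborel. indicator {0..b} x * F x)"
    using b by simp
  also have "\<dots> \<le> (LINT x|lborel. t * (1 - (\<rho> x)^2)^2 + (1/t) * (\<rho>' x)^2)"
  proof (rule integral_mono)
    show "integrable lborel (\<lambda>x. indicator {0..b} x * F x)"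
      using borel_integrable_atLeastAtMost'[OF cont] unfolding set_integrable_def by simp
    show "integrable lborel (\<lambda>x. t * (1 - (\<rho> x)^2)^2 + (1/t) * (\<rho>' x)^2)"
      using integrable_profile_terms(5,6) by simp
    fix x
    have "(1 - \<rho> x)^2 \<le> (1 - (\<rho> x)^2)^2"
      using one_minus_\<rho>_bounds[of x] by (intro power_mono) auto
    then have "t * (1 - \<rho> x)^2 \<le> t * (1 - (\<rho> x)^2)^2"
      using \<open>0 < t\<close> by simp
    then have "F x \<le> t * (1 - (\<rho> x)^2)^2 + (1/t) * (\<rho>' x)^2"
      using two_mult_le_weighted_squares[OF assms, of "1 - \<rho> x" "\<rho>' x"]
      unfolding F_def by simp
    moreover have "0 \<le> t * (1 - (\<rho> x)^2)^2 + (1/t) * (\<rho>' x)^2" using \<open>0 < t\<close> by simp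
    ultimately show "indicator {0..b} x * F x \<le> t * (1 - (\<rho> x)^2)^2 + (1/t) * (\<rho>' x)^2"
      by (simp add: indicator_def)
  qed
  also have "\<dots> = t * (LINT x|lborel. (1 - (\<rho> x)^2)^2) + (1/t) * (LINT x|lborel. (\<rho>' x)^2)"
    using integrable_profile_terms(5,6) by simp
  finally show ?thesis .
qed

lemma dip_le_at:
  assumes "0 < t" and "0 \<le> r"
  shows "(1 - \<rho> 0) - (t * r + (1/t) * (LINT x|lborel. (\<rho>' x)^2)) / 2 \<le> 1 - \<rho> r"
proof -
  have cont: "continuous_on {0..r} \<rho>'" using \<rho>'_cont by (auto intro: continuous_on_subset)
  have "(LINT x|lborel. indicator {0..r} x *\<^sub>R \<rho>' x) = \<rho> r - \<rho> 0"
    using \<rho>_deriv cont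
    by (intro integral_FTC_atLeastAtMost[OF \<open>0 \<le> r\<close>])
       (auto simp: has_real_derivative_iff_has_vector_derivative intro: has_vector_derivative_at_within)
  then have "\<rho> r - \<rho> 0 = (LINT x|lborel. indicator {0..r} x * \<rho>' x)"
    by simp
  also have "\<dots> \<le> (LINT x|lborel. indicator {0..r} x * (t/2) + (1/(2*t)) * (\<rho>' x)^2)"
  proof (rule integral_mono)
    show "integrable lborel (\<lambda>x. indicator {0..r} x * \<rho>' x)"
      using borel_integrable_atLeastAtMost'[OF cont] unfolding set_integrable_def by simp
    show "integrable lborel (\<lambda>x. indicator {0..r} x * (t/2) + (1/(2*t)) * (\<rho>' x)^2)"
      using integrable_profile_terms(6) borel_integrable_atLeastAtMost[of 0 r "\<lambda>_. t/2"]
      by (intro Bochner_Integration.integrable_add) (auto simp: mult.commute)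
    fix x
    have "\<rho>' x \<le> t/2 + (1/(2*t)) * (\<rho>' x)^2"
      using two_mult_le_weighted_squares[OF \<open>0 < t\<close>, of 1 "\<rho>' x"] \<open>0 < t\<close> by (simp add: field_simps)
    moreover have "0 \<le> (1/(2*t)) * (\<rho>' x)^2" using \<open>0 < t\<close> by simp
    ultimately show "indicator {0..r} x * \<rho>' x \<le> indicator {0..r} x * (t/2) + (1/(2*t)) * (\<rho>' x)^2"
      by (simp add: indicator_def)
  qed
  also have "\<dots> = r * (t/2) + (1/(2*t)) * (LINT x|lborel. (\<rho>' x)^2)"
    using integrable_profile_terms(6) \<open>0 \<le> r\<close> by simp
  finally show ?thesis using \<open>0 < t\<close> by (simp add: field_simps)
qed

lemma coupling_le:
  assumes "0 < t"
  shows "(LINT x|lborel. (1 - (\<rho> x)^2) * (v x)^2)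
    \<le> (t * (LINT x|lborel. (1 - (\<rho> x)^2)^2) + (1/t) * (LINT x|lborel. (v x)^4)) / 2"
proof -
  have "(LINT x|lborel. (1 - (\<rho> x)^2) * (v x)^2)
      \<le> (LINT x|lborel. (t * (1 - (\<rho> x)^2)^2 + (1/t) * (v x)^4) / 2)"
  proof (rule integral_mono)
    fix x
    show "(1 - (\<rho> x)^2) * (v x)^2 \<le> (t * (1 - (\<rho> x)^2)^2 + (1/t) * (v x)^4) / 2"
      using two_mult_le_weighted_squares[OF assms, of "1 - (\<rho> x)^2" "(v x)^2"]
      by (simp add: power_mult[symmetric] field_simps)
  qed (use integrable_profile_terms(4,5,8) in simp_all)
  also have "\<dots> = (t * (LINT x|lborel. (1 - (\<rho> x)^2)^2) + (1/t) * (LINT x|lborel. (v x)^4)) / 2"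
    using integrable_profile_terms(5,8) by simp
  finally show ?thesis .
qed

end

lemma C0inf_imp_C1_compact_support:
  fixes f :: "real \<Rightarrow> real"
  assumes "C0inf f"
  shows "\<And>x. (f has_real_derivative deriv f x) (at x)"
    and "continuous_on UNIV (deriv f)"
    and "\<exists>R. \<forall>x. R < \<bar>x\<bar> \<longrightarrow> f x = 0 \<and> deriv f x = 0"
proof -
  have smooth: "\<And>k x. ((deriv ^^ k) f) differentiable (at x)"
    using assms unfolding C0inf_def smooth_fun_def by blast
  show deriv: "(f has_real_derivative deriv f x) (at x)" for x
    using smooth[of 0 x] by (simp add: DERIV_deriv_iff_real_differentiable)
  show "continuous_on UNIV (deriv f)"
    using smooth[of 1] by (simp add: continuous_at_imp_continuous_on differentiable_imp_continuous_within)
  obtain R where R: "\<And>x. R < \<bar>x\<bar> \<Longrightarrow> f x = 0"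
    using assms unfolding C0inf_def by blast
  have "deriv f x = 0" if "R < \<bar>x\<bar>" for x
  proof -
    have "open {y::real. R < \<bar>y\<bar>}" by (intro open_Collect_less continuous_intros)
    then have "\<forall>\<^sub>F y in nhds x. f y = 0"
      using that R by (auto intro: eventually_nhds_in_open[THEN eventually_mono])
    then have "(f has_real_derivative 0) (at x)"
      by (subst DERIV_cong_ev[where g = "\<lambda>_. 0", OF refl _ refl]) auto
    then show ?thesis using deriv by (rule DERIV_unique[rotated])
  qed
  with R show "\<exists>R. \<forall>x. R < \<bar>x\<bar> \<longrightarrow> f x = 0 \<and> deriv f x = 0" by blast
qed

lemma sym_dec_antimono_abs:
  assumes "sym_dec f" and "\<bar>x\<bar> \<le> \<bar>y\<bar>"
  shows "f y \<le> f x"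
proof -
  have "f \<bar>y\<bar> \<le> f \<bar>x\<bar>"
    using assms unfolding sym_dec_def by auto
  moreover have "f \<bar>z\<bar> = f z" for z
    using assms(1) unfolding sym_dec_def by (cases "0 \<le> z") auto
  ultimately show ?thesis by simp
qed

lemma X0qm_lifted_profile:
  assumes "(u, v) \<in> X0qm q m"
  obtains \<theta> \<theta>' where "lifted_profile (\<lambda>x. cmod (u x)) (deriv (\<lambda>x. cmod (u x))) \<theta>' v (deriv v) \<theta> u"
    and "\<And>x y. \<bar>x\<bar> \<le> \<bar>y\<bar> \<Longrightarrow> cmod (u x) \<le> cmod (u y)"
proof -
  from assms obtain \<theta> \<theta>' where lifting: "\<And>x. u x = complex_of_real (cmod (u x)) * cis (\<theta> x)"
    and \<theta>_deriv: "\<And>x. (\<theta> has_real_derivative \<theta>' x) (at x)"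
    and C0inf: "C0inf (\<lambda>x. 1 - cmod (u x))" "C0inf \<theta>'" "C0inf v"
    and sym_dec: "sym_dec (\<lambda>x. 1 - cmod (u x))" "sym_dec \<theta>'"
    unfolding X0qm_def by blast
  note f = C0inf_imp_C1_compact_support[OF C0inf(1)]
  note \<theta>' = C0inf_imp_C1_compact_support[OF C0inf(2)]
  note v = C0inf_imp_C1_compact_support[OF C0inf(3)]
  have \<rho>_deriv: "((\<lambda>x. cmod (u x)) has_real_derivative - deriv (\<lambda>x. 1 - cmod (u x)) x) (at x)" for x
    using DERIV_diff[OF DERIV_const[of 1] f(1)] by simp
  then have \<rho>': "deriv (\<lambda>x. cmod (u x)) = (\<lambda>x. - deriv (\<lambda>x. 1 - cmod (u x)) x)"
    by (intro ext DERIV_imp_deriv)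
  have "u x \<noteq> 0" for x
    using assms unfolding X0qm_def Xqm_def Xspace_def NEspace_def by auto
  moreover have "cmod (u x) \<le> 1" "0 \<le> \<theta>' x" for x
    using sym_dec unfolding sym_dec_def by auto
  moreover have "\<exists>R. \<forall>x. R < \<bar>x\<bar> \<longrightarrow> cmod (u x) = 1 \<and> deriv (\<lambda>x. cmod (u x)) x = 0
      \<and> \<theta>' x = 0 \<and> v x = 0 \<and> deriv v x = 0"
  proof -
    obtain R1 R2 R3 where "\<forall>x. R1 < \<bar>x\<bar> \<longrightarrow> 1 - cmod (u x) = 0 \<and> deriv (\<lambda>x. 1 - cmod (u x)) x = 0"
      "\<forall>x. R2 < \<bar>x\<bar> \<longrightarrow> \<theta>' x = 0 \<and> deriv \<theta>' x = 0" "\<forall>x. R3 < \<bar>x\<bar> \<longrightarrow> v x = 0 \<and> deriv v x = 0"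
      using f(3) \<theta>'(3) v(3) by blast
    then show ?thesis
      unfolding \<rho>' by (intro exI[of _ "max R1 (max R2 R3)"]) auto
  qed
  moreover have "continuous_on UNIV \<theta>'"
    using \<theta>'(1) by (meson DERIV_continuous continuous_at_imp_continuous_on)
  ultimately have "lifted_profile (\<lambda>x. cmod (u x)) (deriv (\<lambda>x. cmod (u x))) \<theta>' v (deriv v) \<theta> u"
    using \<rho>_deriv f(2) \<theta>_deriv v(1,2) lifting
    unfolding lifted_profile_def lifted_profile_axioms_def profile_def \<rho>'
    by (auto intro!: continuous_intros)
  moreover have "cmod (u x) \<le> cmod (u y)" if "\<bar>x\<bar> \<le> \<bar>y\<bar>" for x y
    using sym_dec_antimono_abs[OF sym_dec(1) that] by simp
  ultimately show ?thesis by (rule that)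
qed

lemma X0qm_subset_Xqm: "X0qm q m \<subseteq> Xqm q m"
  unfolding X0qm_def by blast

lemma X0qm_energy_ge:
  assumes "(u, v) \<in> X0qm q m" and "0 \<le> \<alpha>" and "0 \<le> \<beta>"
  shows "- (\<alpha>/2) * m \<le> energy \<alpha> \<beta> u v"
proof -
  obtain \<theta> \<theta>' where P: "lifted_profile (\<lambda>x. cmod (u x)) (deriv (\<lambda>x. cmod (u x))) \<theta>' v (deriv v) \<theta> u"
    and "\<And>x y. \<bar>x\<bar> \<le> \<bar>y\<bar> \<Longrightarrow> cmod (u x) \<le> cmod (u y)"
    by (rule X0qm_lifted_profile[OF assms(1)]) (rule that)
  interpret lifted_profile "\<lambda>x. cmod (u x)" "deriv (\<lambda>x. cmod (u x))" \<theta>' v "deriv v" \<theta> u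
    by (rule P)
  have mass: "(LINT x|lborel. (v x)^2) = m"
    using in_Xqm_iff X0qm_subset_Xqm assms(1) by blast
  have "0 \<le> (LINT x|lborel. (1 - (cmod (u x))^2)^2)" by simp
  then show ?thesis
    using energy_bounds_potential_and_gradient(1)[OF assms(2,3), unfolded mass] energy_eq[of \<alpha> \<beta>]
    by linarith
qed

section \<open>Bump functions\<close>

text \<open>Squaring \<open>max 0 (1 - y\<^sup>2)\<close> makes the bump \<open>C\<^sup>1\<close>, as needed for test functions in \<open>X\<close>.\<close>

definition bump :: "real \<Rightarrow> real" where
  "bump y = (max 0 (1 - y^2))^2"

definition bump' :: "real \<Rightarrow> real" where
  "bump' y = 2 * max 0 (1 - y^2) * (- 2 * y)"

lemma bump_deriv: "(bump has_real_derivative bump' y) (at y)"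
  unfolding bump_def bump'_def
  by (rule has_real_derivative_max0_power2) (auto intro!: derivative_eq_intros)

lemma bump_cont: "continuous_on UNIV bump"
  using bump_deriv by (meson DERIV_continuous continuous_at_imp_continuous_on)

lemma bump'_cont: "continuous_on UNIV bump'"
  unfolding bump'_def by (intro continuous_intros)

lemma bump_bounds: "0 \<le> bump y" "bump y \<le> 1"
  unfolding bump_def by (auto intro: power_le_one)

lemma bump_support: "1 \<le> \<bar>y\<bar> \<Longrightarrow> bump y = 0 \<and> bump' y = 0"
proof -
  assume "1 \<le> \<bar>y\<bar>"
  then have "1 \<le> y^2" using abs_le_square_iff[of 1 y] by simp
  then show ?thesis unfolding bump_def bump'_def by simp
qed

lemma bump_ge: "\<bar>y\<bar> \<le> 1/2 \<Longrightarrow> 9/16 \<le> bump y"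
proof -
  assume "\<bar>y\<bar> \<le> 1/2"
  then have "y^2 \<le> (1/2)^2" using abs_le_square_iff[of y "1/2"] by simp
  then have "(3/4)^2 \<le> (max 0 (1 - y^2))^2" by (intro power_mono) (auto simp: power2_eq_square)
  then show ?thesis unfolding bump_def by (simp add: power2_eq_square)
qed

definition bump_moment :: "nat \<Rightarrow> real" where
  "bump_moment k = (LINT y|lborel. (bump y)^k)"

definition bump_dirichlet :: real where
  "bump_dirichlet = (LINT y|lborel. (bump' y)^2)"

lemma integrable_bump_power: "0 < k \<Longrightarrow> integrable lborel (\<lambda>y. (bump y)^k)"
  by (rule integrable_continuous_compact_support[where R = 1])
     (use bump_support continuous_on_power[OF bump_cont] in auto)

lemma bump_dirichlet_nonneg: "0 \<le> bump_dirichlet"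
  unfolding bump_dirichlet_def by simp

lemma bump_moment_pos:
  assumes "0 < k"
  shows "0 < bump_moment k"
proof -
  have "(9/16)^k * (1/2 - (-1/2)) \<le> bump_moment k"
    unfolding bump_moment_def
    using bump_bounds(1)
    by (intro integral_ge_const_on_interval[OF integrable_bump_power[OF assms]]) (auto intro!: power_mono bump_ge)
  moreover have "0 < (9/16::real)^k * (1/2 - (-1/2))" by simp
  ultimately show ?thesis by linarith
qed

definition scaled_bump :: "real \<Rightarrow> real \<Rightarrow> real \<Rightarrow> real \<Rightarrow> real" where
  "scaled_bump c D L x = c * bump ((x - D) / L)"

definition scaled_bump' :: "real \<Rightarrow> real \<Rightarrow> real \<Rightarrow> real \<Rightarrow> real" where
  "scaled_bump' c D L x = c * bump' ((x - D) / L) / L"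

lemma scaled_bump_support:
  assumes "0 < L" and "L \<le> \<bar>x - D\<bar>"
  shows "scaled_bump c D L x = 0" "scaled_bump' c D L x = 0"
proof -
  have "1 \<le> \<bar>(x - D) / L\<bar>" using assms by (simp add: abs_divide)
  then show "scaled_bump c D L x = 0" "scaled_bump' c D L x = 0"
    unfolding scaled_bump_def scaled_bump'_def using bump_support by auto
qed

lemma scaled_bump:
  assumes L: "0 < L"
  shows "\<And>x. (scaled_bump c D L has_real_derivative scaled_bump' c D L x) (at x)"
    and "continuous_on UNIV (scaled_bump' c D L)"
    and "\<And>x. \<bar>D\<bar> + L < \<bar>x\<bar> \<Longrightarrow> scaled_bump c D L x = 0 \<and> scaled_bump' c D L x = 0"
    and "\<And>k. (LINT x|lborel. (scaled_bump c D L x)^k) = c^k * L * bump_moment k"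
    and "(LINT x|lborel. (scaled_bump' c D L x)^2) = c^2 * bump_dirichlet / L"
proof -
  show "(scaled_bump c D L has_real_derivative scaled_bump' c D L x) (at x)" for x
  proof -
    have "((\<lambda>x. (x - D) / L) has_real_derivative 1 / L) (at x)"
      using L by (auto intro!: derivative_eq_intros)
    from DERIV_cmult[OF DERIV_chain2[OF bump_deriv this], of c] show ?thesis
      unfolding scaled_bump_def scaled_bump'_def by simp
  qed
  show "continuous_on UNIV (scaled_bump' c D L)"
    unfolding scaled_bump'_def
    by (intro continuous_intros continuous_on_compose2[OF bump'_cont]) (use L in auto)
  show "\<bar>D\<bar> + L < \<bar>x\<bar> \<Longrightarrow> scaled_bump c D L x = 0 \<and> scaled_bump' c D L x = 0" for x
    using scaled_bump_support[OF L, of x D] by simp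
  show "(LINT x|lborel. (scaled_bump c D L x)^k) = c^k * L * bump_moment k" for k
    unfolding scaled_bump_def power_mult_distrib bump_moment_def
    using lborel_integral_rescale[OF L, of "\<lambda>y. (bump y)^k" D] by simp
  show "(LINT x|lborel. (scaled_bump' c D L x)^2) = c^2 * bump_dirichlet / L"
  proof -
    have "(\<lambda>x. (scaled_bump' c D L x)^2) = (\<lambda>x. (c / L)^2 * (bump' ((x - D) / L))^2)"
      unfolding scaled_bump'_def by (simp add: power_mult_distrib power_divide)
    then have "(LINT x|lborel. (scaled_bump' c D L x)^2) = (c / L)^2 * (L * bump_dirichlet)"
      unfolding bump_dirichlet_def
      using lborel_integral_rescale[OF L, of "\<lambda>y. (bump' y)^2" D] by simp
    then show ?thesis using L by (simp add: power2_eq_square)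
  qed
qed

lemma spread_bump:
  assumes "0 \<le> M" and "0 < \<epsilon>" and "0 \<le> \<beta>"
  obtains c L where "0 < L" and "c^2 * L * bump_moment 2 = M"
    and "(1/2) * (c^2 * bump_dirichlet / L) + (\<beta>/4) * (c^4 * L * bump_moment 4) < \<epsilon>"
proof -
  define J1 J2 J4 where "J1 = bump_dirichlet" and "J2 = bump_moment 2" and "J4 = bump_moment 4"
  have J: "0 \<le> J1" "0 < J2" "0 < J4"
    unfolding J1_def J2_def J4_def using bump_dirichlet_nonneg bump_moment_pos by auto
  define K where "K = M * J1 / (2 * J2) + \<beta> * M^2 * J4 / (4 * J2^2)"
  have "0 \<le> K" unfolding K_def using assms J by simp
  define L where "L = K / \<epsilon> + 1"
  have L: "1 \<le> L" "K < \<epsilon> * L" unfolding L_def using \<open>0 \<le> K\<close> assms(2) by (auto simp: field_simps)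
  define c where "c = sqrt (M / (L * J2))"
  have c2: "c^2 = M / (L * J2)" unfolding c_def using assms(1) L J by simp
  have c4: "c^4 = (M / (L * J2))^2"
    unfolding c2[symmetric] by simp
  have "(1/2) * (c^2 * J1 / L) + (\<beta>/4) * (c^4 * L * J4) = (M * J1 / (2 * J2)) / L^2 + (\<beta> * M^2 * J4 / (4 * J2^2)) / L"
    unfolding c2 c4 using L J by (simp add: power2_eq_square field_simps)
  also have "\<dots> \<le> (M * J1 / (2 * J2)) / L + (\<beta> * M^2 * J4 / (4 * J2^2)) / L"
    using L J assms by (intro add_mono divide_left_mono order_refl) (auto simp: power2_eq_square)
  also have "\<dots> = K / L"
    unfolding K_def by (simp add: add_divide_distrib)
  also have "\<dots> < \<epsilon>" using L by (simp add: divide_less_eq)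
  finally show ?thesis
    using that[of L c] L J c2 unfolding J1_def J2_def J4_def by simp
qed

section \<open>Competitors\<close>

lemma amplitude_bump_parameters:
  fixes J1 J2 J3 q :: real
  assumes J: "0 \<le> J1" "0 < J2" "0 < J3" and "0 < q"
  obtains a b L where "0 < a" "a \<le> 1/2" "0 \<le> b" "0 < L" "(1/2) * a * b * (L * J2) = q"
    "(a^2/4) * (J1 / L) + (b^2/2 + a^2/4) * (L * J2) - (a * b^2 / 2) * (L * J3) < sqrt 2 * q"
proof -
  define s where "s = sqrt 2"
  have s: "0 < s" "s * s = 2" unfolding s_def by auto
  define a where "a = min (1/2) (q^2 * J3 / ((J1 + 1) * J2^2))"
  \<comment> \<open>with \<open>b = a / \<surd>2\<close> the quadratic terms add up to \<open>\<surd>2 q\<close>, and for small \<open>a\<close> the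
    cubic gain \<open>a q J\<^sub>3 / (\<surd>2 J\<^sub>2)\<close> beats the gradient cost\<close>
  define b where "b = a * s / 2"
  define L where "L = 4 * q / (a^2 * s * J2)"
  have a: "0 < a" "a \<le> 1/2" "a * ((J1 + 1) * J2^2) \<le> q^2 * J3"
    unfolding a_def using J \<open>0 < q\<close> by (auto simp: min_def pos_le_divide_eq)
  have b2: "b^2 = a^2 / 2" unfolding b_def using s by (simp add: power2_eq_square field_simps)
  have L: "0 < L" unfolding L_def using a s J \<open>0 < q\<close> by simp
  have "a * a \<le> 1" using a by (intro mult_le_one) auto
  then have "a * a * J1 \<le> J1 + 1"
    using mult_right_le_one_le[of J1 "a * a"] J by (simp add: mult.commute)
  then have "a * (a * a * J1) * J2^2 \<le> a * (J1 + 1) * J2^2"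
    using a by (intro mult_right_mono mult_left_mono) auto
  then have "a^3 * J1 * J2^2 \<le> a * ((J1 + 1) * J2^2)"
    by (simp add: power3_eq_cube mult_ac)
  moreover have "0 < q^2 * J3" using J \<open>0 < q\<close> by simp
  ultimately have small: "a^3 * J1 * J2^2 < 8 * q^2 * J3"
    using a(3) by linarith
  have "(a^2/4) * (J1 / L) = (a * q * J3 / (s * J2)) * (a^3 * J1 * J2^2 / (8 * q^2 * J3))"
    unfolding L_def using a s J \<open>0 < q\<close> by (simp add: field_simps power2_eq_square power3_eq_cube)
  also have "\<dots> < a * q * J3 / (s * J2) * 1"
    using small a s J \<open>0 < q\<close> by (intro mult_strict_left_mono) (auto simp: divide_less_eq)
  finally have cost: "(a^2/4) * (J1 / L) < a * q * J3 / (s * J2)" by simp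
  have "(b^2/2 + a^2/4) * (L * J2) = s * q"
    unfolding b2 L_def using a s J by (simp add: field_simps power2_eq_square)
  moreover have "(a * b^2 / 2) * (L * J3) = a * q * J3 / (s * J2)"
    unfolding b2 L_def using a s J by (simp add: field_simps power2_eq_square)
  moreover have "(1/2) * a * b * (L * J2) = q"
    unfolding b_def L_def using a s J by (simp add: field_simps power2_eq_square)
  ultimately show ?thesis
    using that[of a b L] a L cost s unfolding s_def b_def by simp
qed

text \<open>A shallow dip \<open>\<rho>\<^sup>2 = 1 - a g\<close> with phase gradient \<open>\<theta>' = b g\<close>, where \<open>g\<close> is a rescaled bump:
  its momentum is \<open>a b \<integral> g\<^sup>2 / 2\<close>, and its energy beats \<open>\<surd>2 q\<close> by the cubic term \<open>a b\<^sup>2 \<integral> g\<^sup>3 / 2\<close>.\<close>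

lemma energy_density_u_sqrt_dip_le:
  fixes a b y y' :: real
  assumes "0 \<le> a * y" and "a * y \<le> 1/2"
  shows "energy_density_u (sqrt (1 - a * y)) (- (a * y') / (2 * sqrt (1 - a * y))) (b * y)
    \<le> (a^2/4) * y'^2 + (b^2/2 + a^2/4) * y^2 - (a * b^2 / 2) * y^3"
proof -
  define r' where "r' = - (a * y') / (2 * sqrt (1 - a * y))"
  have "r'^2 = a^2 * y'^2 / (4 * (1 - a * y))"
    unfolding r'_def using assms by (simp add: power2_eq_square field_simps)
  also have "\<dots> \<le> a^2 * y'^2 / 2"
    using assms by (intro divide_left_mono) auto
  finally have "r'^2 \<le> a^2 * y'^2 / 2" .
  moreover have "energy_density_u (sqrt (1 - a * y)) r' (b * y)
      = (1/2) * r'^2 + ((b^2/2 + a^2/4) * y^2 - (a * b^2 / 2) * y^3)"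
    unfolding energy_density_u_def power_mult_distrib using assms
    by (simp add: power2_eq_square power3_eq_cube algebra_simps)
  ultimately show ?thesis
    unfolding r'_def[symmetric] by (simp add: power_mult_distrib)
qed

lemma amplitude_bump_lifted_profile:
  assumes L: "0 < L" and a: "0 < a" "a \<le> 1/2" and b: "0 \<le> b"
    and v_deriv: "\<And>x. (v has_real_derivative v' x) (at x)" and v'_cont: "continuous_on UNIV v'"
    and v_support: "\<exists>R. \<forall>x. R < \<bar>x\<bar> \<longrightarrow> v x = 0 \<and> v' x = 0"
  obtains \<theta> u where "lifted_profile (\<lambda>x. sqrt (1 - a * scaled_bump 1 0 L x))
      (\<lambda>x. - (a * scaled_bump' 1 0 L x) / (2 * sqrt (1 - a * scaled_bump 1 0 L x)))
      (\<lambda>x. b * scaled_bump 1 0 L x) v v' \<theta> u"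
proof -
  define g g' where "g = scaled_bump 1 0 L" and "g' = scaled_bump' 1 0 L"
  note G = scaled_bump[OF L, where c = 1 and D = 0, folded g_def g'_def]
  have g01: "0 \<le> g x" "g x \<le> 1" for x
    unfolding g_def scaled_bump_def using bump_bounds by auto
  have half: "1/2 \<le> 1 - a * g x" for x
    using mult_mono[OF a(2) g01(2)] a g01(1) by simp
  define \<rho> \<rho>' \<theta>' where "\<rho> x = sqrt (1 - a * g x)" and "\<rho>' x = - (a * g' x) / (2 * \<rho> x)"
    and "\<theta>' x = b * g x" for x
  define \<theta> u where "\<theta> y = integral {-L - 1..y} \<theta>'" and "u y = complex_of_real (\<rho> y) * cis (\<theta> y)" for y
  have \<rho>_pos: "0 < \<rho> x" for x
    unfolding \<rho>_def using half[of x] by auto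
  have g_cont: "continuous_on UNIV g"
    using G(1) by (meson DERIV_continuous continuous_at_imp_continuous_on)
  have \<rho>_deriv: "(\<rho> has_real_derivative \<rho>' x) (at x)" for x
  proof -
    have "((\<lambda>x. 1 - a * g x) has_real_derivative - (a * g' x)) (at x)"
      by (auto intro!: derivative_eq_intros G(1))
    from DERIV_chain2[OF DERIV_real_sqrt this] half[of x] show ?thesis
      unfolding \<rho>_def[abs_def] \<rho>'_def by (simp add: field_simps)
  qed
  have \<theta>_deriv: "(\<theta> has_real_derivative \<theta>' x) (at x)" for x
    unfolding \<theta>_def[abs_def]
    by (rule has_real_derivative_integral_from_left_of_support)
       (use g_cont G(3) in \<open>auto simp: \<theta>'_def intro!: continuous_intros\<close>)
  have "lifted_profile \<rho> \<rho>' \<theta>' v v' \<theta> u"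
  proof unfold_locales
    show "continuous_on UNIV \<rho>'"
      unfolding \<rho>'_def using \<rho>_pos G(2) DERIV_continuous_on[OF \<rho>_deriv]
      by (intro continuous_intros) (auto simp: less_imp_neq[symmetric] continuous_on_eq_continuous_within)
    show "continuous_on UNIV \<theta>'" unfolding \<theta>'_def using g_cont by (intro continuous_intros)
    show "\<rho> x \<le> 1" "0 \<le> \<theta>' x" for x
      unfolding \<rho>_def \<theta>'_def using a g01[of x] b by auto
    obtain R where "\<forall>x. R < \<bar>x\<bar> \<longrightarrow> v x = 0 \<and> v' x = 0" using v_support by blast
    then show "\<exists>R. \<forall>x. R < \<bar>x\<bar> \<longrightarrow> \<rho> x = 1 \<and> \<rho>' x = 0 \<and> \<theta>' x = 0 \<and> v x = 0 \<and> v' x = 0"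
      using G(3) by (intro exI[of _ "max R L"]) (auto simp: \<rho>_def \<rho>'_def \<theta>'_def)
  qed (use \<rho>_deriv \<theta>_deriv v_deriv v'_cont \<rho>_pos in \<open>auto simp: u_def\<close>)
  then show ?thesis
    using that unfolding \<rho>_def[abs_def] \<rho>'_def[abs_def] \<theta>'_def[abs_def] g_def g'_def by blast
qed

lemma amplitude_bump_lifting:
  assumes L: "0 < L" and a: "0 < a" "a \<le> 1/2" and b: "0 \<le> b"
    and v_deriv: "\<And>x. (v has_real_derivative v' x) (at x)" and v'_cont: "continuous_on UNIV v'"
    and v_support: "\<exists>R. \<forall>x. R < \<bar>x\<bar> \<longrightarrow> v x = 0 \<and> v' x = 0"
  obtains \<rho> \<rho>' \<theta>' \<theta> u where "lifted_profile \<rho> \<rho>' \<theta>' v v' \<theta> u"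
    and "(1/2) * (LINT x|lborel. (1 - (\<rho> x)^2) * \<theta>' x) = (1/2) * a * b * (L * bump_moment 2)"
    and "(LINT x|lborel. energy_density_u (\<rho> x) (\<rho>' x) (\<theta>' x))
      \<le> (a^2/4) * (bump_dirichlet / L) + (b^2/2 + a^2/4) * (L * bump_moment 2)
        - (a * b^2 / 2) * (L * bump_moment 3)"
proof -
  define g g' where "g = scaled_bump 1 0 L" and "g' = scaled_bump' 1 0 L"
  note G = scaled_bump[OF L, where c = 1 and D = 0, folded g_def g'_def]
  define \<rho> \<rho>' \<theta>' where "\<rho> x = sqrt (1 - a * g x)" and "\<rho>' x = - (a * g' x) / (2 * \<rho> x)"
    and "\<theta>' x = b * g x" for x
  obtain \<theta> u where P: "lifted_profile \<rho> \<rho>' \<theta>' v v' \<theta> u"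
    using amplitude_bump_lifted_profile[OF assms]
    unfolding \<rho>_def[abs_def] \<rho>'_def[abs_def] \<theta>'_def[abs_def] g_def g'_def by blast
  have ag: "0 \<le> a * g x" "a * g x \<le> 1/2" for x
    using mult_mono[OF a(2), of "g x" 1] a bump_bounds unfolding g_def scaled_bump_def by auto
  have "(\<rho> x)^2 = 1 - a * g x" for x
    unfolding \<rho>_def using ag[of x] by simp
  then have momentum: "(1/2) * (LINT x|lborel. (1 - (\<rho> x)^2) * \<theta>' x) = (1/2) * a * b * (L * bump_moment 2)"
    using G(4)[of 2] unfolding \<theta>'_def by (simp add: power2_eq_square mult_ac)
  have "continuous_on UNIV g"
    using G(1) by (meson DERIV_continuous continuous_at_imp_continuous_on)
  then have integrable: "integrable lborel (\<lambda>x. (g' x)^2)" "integrable lborel (\<lambda>x. (g x)^2)"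
    "integrable lborel (\<lambda>x. (g x)^3)"
    using G(2,3) by (auto intro!: integrable_continuous_compact_support[where R = L] continuous_intros)
  have "(LINT x|lborel. energy_density_u (\<rho> x) (\<rho>' x) (\<theta>' x))
      \<le> (LINT x|lborel. (a^2/4) * (g' x)^2 + (b^2/2 + a^2/4) * (g x)^2 - (a * b^2 / 2) * (g x)^3)"
    using profile.integrable_profile_terms(1)[OF lifted_profile.axioms(1)[OF P]] integrable
      energy_density_u_sqrt_dip_le[OF ag] unfolding \<rho>_def \<rho>'_def \<theta>'_def
    by (intro integral_mono) auto
  also have "\<dots> = (a^2/4) * (LINT x|lborel. (g' x)^2) + (b^2/2 + a^2/4) * (LINT x|lborel. (g x)^2)
        - (a * b^2 / 2) * (LINT x|lborel. (g x)^3)"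
    using integrable by simp
  also have "\<dots> = (a^2/4) * (bump_dirichlet / L) + (b^2/2 + a^2/4) * (L * bump_moment 2)
        - (a * b^2 / 2) * (L * bump_moment 3)"
    using G(4)[of 2] G(4)[of 3] G(5) by simp
  finally show ?thesis
    by (rule that[OF P momentum])
qed

lemma Emin_less_sqrt2_q:
  assumes "0 < q" and "0 \<le> m" and "0 \<le> \<alpha>" and "0 \<le> \<beta>"
  shows "Emin \<alpha> \<beta> q m < ereal (sqrt 2 * q)"
proof -
  obtain a b L where a: "0 < a" "a \<le> 1/2" and b: "0 \<le> b" and L: "0 < L"
    and momentum: "(1/2) * a * b * (L * bump_moment 2) = q"
    and energy_u: "(a^2/4) * (bump_dirichlet / L) + (b^2/2 + a^2/4) * (L * bump_moment 2)
        - (a * b^2 / 2) * (L * bump_moment 3) < sqrt 2 * q"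
    using amplitude_bump_parameters[OF bump_dirichlet_nonneg _ _ \<open>0 < q\<close>] bump_moment_pos
    by (metis zero_less_numeral)
  define \<Delta> where "\<Delta> = sqrt 2 * q - ((a^2/4) * (bump_dirichlet / L) + (b^2/2 + a^2/4) * (L * bump_moment 2)
      - (a * b^2 / 2) * (L * bump_moment 3))"
  have "0 < \<Delta>" unfolding \<Delta>_def using energy_u by simp
  then obtain c Lv where Lv: "0 < Lv" and mass: "c^2 * Lv * bump_moment 2 = m"
    and energy_v: "(1/2) * (c^2 * bump_dirichlet / Lv) + (\<beta>/4) * (c^4 * Lv * bump_moment 4) < \<Delta>"
    using spread_bump[OF \<open>0 \<le> m\<close> _ \<open>0 \<le> \<beta>\<close>] by blast
  note V = scaled_bump[OF Lv, where c = c and D = 0]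
  have "\<exists>R. \<forall>x. R < \<bar>x\<bar> \<longrightarrow> scaled_bump c 0 Lv x = 0 \<and> scaled_bump' c 0 Lv x = 0"
    using V(3) by blast
  then obtain \<rho> \<rho>' \<theta>' \<theta> u where P: "lifted_profile \<rho> \<rho>' \<theta>' (scaled_bump c 0 Lv) (scaled_bump' c 0 Lv) \<theta> u"
    and "(1/2) * (LINT x|lborel. (1 - (\<rho> x)^2) * \<theta>' x) = (1/2) * a * b * (L * bump_moment 2)"
    and "(LINT x|lborel. energy_density_u (\<rho> x) (\<rho>' x) (\<theta>' x))
      \<le> (a^2/4) * (bump_dirichlet / L) + (b^2/2 + a^2/4) * (L * bump_moment 2)
        - (a * b^2 / 2) * (L * bump_moment 3)"
    using amplitude_bump_lifting[OF L a b V(1,2)] by blast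
  then have X: "(u, scaled_bump c 0 Lv) \<in> Xqm q m"
    and energy_u: "(LINT x|lborel. energy_density_u (\<rho> x) (\<rho>' x) (\<theta>' x)) \<le> sqrt 2 * q - \<Delta>"
    using lifted_profile.in_Xqm_iff[OF P] V(4)[of 2] mass momentum unfolding \<Delta>_def by simp_all
  interpret profile \<rho> \<rho>' \<theta>' "scaled_bump c 0 Lv" "scaled_bump' c 0 Lv"
    using P by (rule lifted_profile.axioms(1))
  have "(LINT x|lborel. energy_density_v \<alpha> \<beta> (\<rho> x) (scaled_bump c 0 Lv x) (scaled_bump' c 0 Lv x))
      \<le> (1/2) * (c^2 * bump_dirichlet / Lv) + (\<beta>/4) * (c^4 * Lv * bump_moment 4)"
    using integral_energy_density_v_le[OF \<open>0 \<le> \<alpha>\<close>, of \<beta>] V(4)[of 4] V(5) by simp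
  then have energy: "energy \<alpha> \<beta> u (scaled_bump c 0 Lv) < sqrt 2 * q"
    using lifted_profile.energy_eq[OF P, of \<alpha> \<beta>] integral_energy_density_split[of \<alpha> \<beta>] energy_u energy_v
    by linarith
  have "Emin \<alpha> \<beta> q m \<le> ereal (energy \<alpha> \<beta> u (scaled_bump c 0 Lv))"
    unfolding Emin_def using X by (rule INF_lower2) simp
  also have "\<dots> < ereal (sqrt 2 * q)"
    using energy by simp
  finally show ?thesis .
qed

lemma core_bump_parameters:
  assumes "0 < m" and "0 \<le> \<beta>" and "0 < \<epsilon>" and "0 < r"
  obtains A L where "0 < A" "0 < L" "2 * r \<le> L" "A * L * bump_moment 2 \<le> m"
    "(1/2) * (A * bump_dirichlet / L) + (\<beta>/4) * (A^2 * L * bump_moment 4) \<le> A * \<epsilon> / 2"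
proof -
  define J1 J2 J4 where "J1 = bump_dirichlet" and "J2 = bump_moment 2" and "J4 = bump_moment 4"
  have J: "0 \<le> J1" "0 < J2" "0 < J4"
    unfolding J1_def J2_def J4_def using bump_dirichlet_nonneg bump_moment_pos by auto
  define L where "L = max (2 * r) (2 * J1 / \<epsilon> + 1)"
  have L: "0 < L" "2 * r \<le> L" "J1 / L \<le> \<epsilon> / 2"
    unfolding L_def using assms J by (auto simp: divide_le_eq field_simps max_def)
  define A where "A = min (m / (L * J2)) (\<epsilon> / (\<beta> * L * J4 + 1))"
  have den: "0 < \<beta> * L * J4 + 1" using assms L J by (simp add: add_nonneg_pos)
  have "A \<le> m / (L * J2)" "A \<le> \<epsilon> / (\<beta> * L * J4 + 1)"
    unfolding A_def by auto
  moreover have "0 < A" unfolding A_def using assms L J den by simp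
  ultimately have A: "0 < A" "A * (L * J2) \<le> m" "A * (\<beta> * L * J4 + 1) \<le> \<epsilon>"
    using L J den by (auto simp: pos_le_divide_eq)
  have "A * J1 / L \<le> A * \<epsilon> / 2"
    using mult_left_mono[OF L(3), of A] A(1) by simp
  moreover have "A * (\<beta> * L * J4) \<le> \<epsilon>"
    using A(1,3) by (simp add: distrib_left)
  then have "(\<beta>/4) * (A^2 * L * J4) \<le> (1/4) * (A * \<epsilon>)"
    using mult_left_mono[of "A * (\<beta> * L * J4)" \<epsilon> A] A(1) by (simp add: power2_eq_square mult_ac)
  ultimately have "(1/2) * (A * J1 / L) + (\<beta>/4) * (A^2 * L * J4) \<le> A * \<epsilon> / 2"
    by linarith
  then show ?thesis
    using that[of A L] A L unfolding J1_def J2_def J4_def by (simp add: mult.assoc)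
qed

lemma sum_of_disjoint_scaled_bumps:
  fixes c c' L L' D :: real
  assumes L: "0 < L" and L': "0 < L'" and D: "L + L' \<le> D"
  defines "w \<equiv> \<lambda>x. scaled_bump c 0 L x + scaled_bump c' D L' x"
    and "w' \<equiv> \<lambda>x. scaled_bump' c 0 L x + scaled_bump' c' D L' x"
  shows "\<And>x. (w has_real_derivative w' x) (at x)" and "continuous_on UNIV w'"
    and "\<exists>R. \<forall>x. R < \<bar>x\<bar> \<longrightarrow> w x = 0 \<and> w' x = 0"
    and "\<And>x. \<bar>x\<bar> \<le> L \<Longrightarrow> w x = scaled_bump c 0 L x"
    and "\<And>k. 0 < k \<Longrightarrow> (LINT x|lborel. (w x)^k) = c^k * L * bump_moment k + c'^k * L' * bump_moment k"
    and "(LINT x|lborel. (w' x)^2) = c^2 * bump_dirichlet / L + c'^2 * bump_dirichlet / L'"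
proof -
  note B1 = scaled_bump[OF L, where c = c and D = 0]
  note B2 = scaled_bump[OF L', where c = c' and D = D]
  have disjoint: "(scaled_bump c 0 L x = 0 \<and> scaled_bump' c 0 L x = 0)
      \<or> (scaled_bump c' D L' x = 0 \<and> scaled_bump' c' D L' x = 0)" for x
  proof (cases "L \<le> \<bar>x\<bar>")
    case True
    then show ?thesis using scaled_bump_support[OF L, of x 0] by simp
  next
    case False
    then have "L' \<le> \<bar>x - D\<bar>" using D by linarith
    then show ?thesis using scaled_bump_support[OF L'] by simp
  qed
  have cont: "continuous_on UNIV (scaled_bump c 0 L)" "continuous_on UNIV (scaled_bump c' D L')"
    using B1(1) B2(1) by (meson DERIV_continuous continuous_at_imp_continuous_on)+
  have integrable: "integrable lborel (\<lambda>x. (f x)^k)"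
    if "f \<in> {scaled_bump c 0 L, scaled_bump' c 0 L, scaled_bump c' D L', scaled_bump' c' D L'}" "0 < k"
    for f k
    using that cont B1(2,3) B2(2,3) L L'
    by (auto intro!: integrable_continuous_compact_support[where R = "L + \<bar>D\<bar> + L'"] continuous_intros)
  show "(w has_real_derivative w' x) (at x)" for x
    unfolding w_def w'_def using B1(1) B2(1) by (rule DERIV_add)
  show "continuous_on UNIV w'"
    unfolding w'_def using B1(2) B2(2) by (intro continuous_intros)
  show "\<exists>R. \<forall>x. R < \<bar>x\<bar> \<longrightarrow> w x = 0 \<and> w' x = 0"
    using B1(3) B2(3) L L' unfolding w_def w'_def by (intro exI[of _ "\<bar>D\<bar> + L' + L"]) auto
  show "w x = scaled_bump c 0 L x" if "\<bar>x\<bar> \<le> L" for x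
    using that D L' scaled_bump_support[OF L', of x D] unfolding w_def by simp
  show "(LINT x|lborel. (w x)^k) = c^k * L * bump_moment k + c'^k * L' * bump_moment k" if "0 < k" for k
  proof -
    have "(w x)^k = (scaled_bump c 0 L x)^k + (scaled_bump c' D L' x)^k" for x
      using disjoint[of x] that unfolding w_def by auto
    then show ?thesis
      using integrable[of "scaled_bump c 0 L" k] integrable[of "scaled_bump c' D L'" k] B1(4) B2(4) that
      by simp
  qed
  have "(w' x)^2 = (scaled_bump' c 0 L x)^2 + (scaled_bump' c' D L' x)^2" for x
    using disjoint[of x] unfolding w'_def by auto
  then show "(LINT x|lborel. (w' x)^2) = c^2 * bump_dirichlet / L + c'^2 * bump_dirichlet / L'"
    using integrable[of "scaled_bump' c 0 L" 2] integrable[of "scaled_bump' c' D L'" 2] B1(5) B2(5) by simp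
qed

text \<open>A low, wide bump around \<open>0\<close> plus the remaining mass spread far away.\<close>

lemma cheap_field_bounded_below_near_origin:
  assumes "0 < m" and "0 \<le> \<beta>" and "0 < \<kappa>" and "0 < r"
  obtains w w' \<gamma> where "\<And>x. (w has_real_derivative w' x) (at x)" "continuous_on UNIV w'"
    "\<exists>R. \<forall>x. R < \<bar>x\<bar> \<longrightarrow> w x = 0 \<and> w' x = 0"
    "(LINT x|lborel. (w x)^2) = m" "0 < \<gamma>" "\<And>x. \<bar>x\<bar> \<le> r \<Longrightarrow> \<gamma> \<le> (w x)^2"
    "(1/2) * (LINT x|lborel. (w' x)^2) + (\<beta>/4) * (LINT x|lborel. (w x)^4) \<le> \<kappa> * r * \<gamma>"
proof -
  define \<epsilon> where "\<epsilon> = \<kappa> * r * (81/256)"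
  obtain A L where A: "0 < A" and L: "0 < L" "2 * r \<le> L" and mass1: "A * L * bump_moment 2 \<le> m"
    and cost1: "(1/2) * (A * bump_dirichlet / L) + (\<beta>/4) * (A^2 * L * bump_moment 4) \<le> A * \<epsilon> / 2"
    using core_bump_parameters[OF \<open>0 < m\<close> \<open>0 \<le> \<beta>\<close> _ \<open>0 < r\<close>, of \<epsilon>] assms unfolding \<epsilon>_def by auto
  have "0 \<le> m - A * L * bump_moment 2" "0 < A * \<epsilon> / 2"
    using mass1 A assms unfolding \<epsilon>_def by auto
  then obtain c' L' where L': "0 < L'" and mass2: "c'^2 * L' * bump_moment 2 = m - A * L * bump_moment 2"
    and cost2: "(1/2) * (c'^2 * bump_dirichlet / L') + (\<beta>/4) * (c'^4 * L' * bump_moment 4) < A * \<epsilon> / 2"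
    using spread_bump[OF _ _ \<open>0 \<le> \<beta>\<close>] by blast
  define w w' where "w x = scaled_bump (sqrt A) 0 L x + scaled_bump c' (L + L') L' x"
    and "w' x = scaled_bump' (sqrt A) 0 L x + scaled_bump' c' (L + L') L' x" for x
  note W = sum_of_disjoint_scaled_bumps[OF L(1) L' order_refl, where c = "sqrt A" and c' = c',
      folded w_def w'_def]
  have sqrt_A: "sqrt A ^ 2 = A" "sqrt A ^ 4 = A^2"
  proof -
    show "sqrt A ^ 2 = A" using A by simp
    have "sqrt A ^ 4 = (sqrt A ^ 2)^2" by simp
    then show "sqrt A ^ 4 = A^2" using A by simp
  qed
  show ?thesis
  proof (rule that[of w w' "A * (81/256)"])
    show "(LINT x|lborel. (w x)^2) = m"
      using W(5)[of 2] mass2 sqrt_A by simp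
    show "A * (81/256) \<le> (w x)^2" if "\<bar>x\<bar> \<le> r" for x
    proof -
      have "\<bar>(x - 0) / L\<bar> \<le> 1/2" using that L by (simp add: abs_divide divide_le_eq)
      then have "(9/16)^2 \<le> (bump ((x - 0) / L))^2" by (intro power_mono bump_ge) auto
      then have "A * (81/256) \<le> A * (bump ((x - 0) / L))^2"
        using A by (intro mult_left_mono) (auto simp: power2_eq_square)
      moreover have "\<bar>x\<bar> \<le> L" using that L by linarith
      ultimately show ?thesis
        using W(4) sqrt_A unfolding scaled_bump_def by (simp add: power_mult_distrib)
    qed
    have "(1/2) * (LINT x|lborel. (w' x)^2) + (\<beta>/4) * (LINT x|lborel. (w x)^4)
        = ((1/2) * (A * bump_dirichlet / L) + (\<beta>/4) * (A^2 * L * bump_moment 4))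
          + ((1/2) * (c'^2 * bump_dirichlet / L') + (\<beta>/4) * (c'^4 * L' * bump_moment 4))"
      using W(5)[of 4] W(6) sqrt_A by (simp add: algebra_simps)
    also have "\<dots> \<le> A * \<epsilon>"
      using cost1 cost2 by linarith
    also have "\<dots> = \<kappa> * r * (A * (81/256))"
      unfolding \<epsilon>_def by simp
    finally show "(1/2) * (LINT x|lborel. (w' x)^2) + (\<beta>/4) * (LINT x|lborel. (w x)^4)
        \<le> \<kappa> * r * (A * (81/256))" .
  qed (use W(1-3) A in auto)
qed

section \<open>Near-minimizing sequences\<close>

text \<open>Pairs in \<open>X\<^sup>0\<^sub>q\<^sub>,\<^sub>m\<close> with energy below \<open>c\<close> have a dip
  \<open>1 - |u(0)| > s\<^sub>0\<close>, which by the energy bounds persists on \<open>[-r\<^sub>0, r\<^sub>0]\<close>.\<close>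

locale subcritical_energy =
  fixes \<alpha> \<beta> q m c :: real
  assumes \<alpha>_pos: "0 < \<alpha>" and \<beta>_nonneg: "0 \<le> \<beta>" and q_pos: "0 < q" and m_nonneg: "0 \<le> m"
    and c_less: "c < sqrt 2 * q"
begin

definition K :: real where
  "K = sqrt 2 * q + \<alpha> * m / 2"

definition s\<^sub>0 :: real where
  "s\<^sub>0 = (sqrt 2 * q - c) / (sqrt 2 * q + \<alpha> * m)"

definition r\<^sub>0 :: real where
  "r\<^sub>0 = s\<^sub>0^2 / (8 * K)"

lemma K_pos: "0 < K"
  unfolding K_def using q_pos \<alpha>_pos m_nonneg by (simp add: add_pos_nonneg)

lemma s\<^sub>0_pos: "0 < s\<^sub>0"
  unfolding s\<^sub>0_def using q_pos \<alpha>_pos m_nonneg c_less by (simp add: add_pos_nonneg)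

lemma r\<^sub>0_pos: "0 < r\<^sub>0"
  unfolding r\<^sub>0_def using s\<^sub>0_pos K_pos by simp

end

locale low_energy_pair = subcritical_energy \<alpha> \<beta> q m c +
  lifted_profile "\<lambda>x. cmod (u x)" "deriv (\<lambda>x. cmod (u x))" \<theta>' v "deriv v" \<theta> u
  for \<alpha> \<beta> q m c :: real and u :: "real \<Rightarrow> complex" and v \<theta> \<theta>' :: "real \<Rightarrow> real" +
  assumes norm_mono: "\<And>x y. \<bar>x\<bar> \<le> \<bar>y\<bar> \<Longrightarrow> cmod (u x) \<le> cmod (u y)"
    and in_Xqm: "(u, v) \<in> Xqm q m" and low_energy: "energy \<alpha> \<beta> u v < c"
begin

lemma momentum_mass:
  "(1/2) * (LINT x|lborel. (1 - (cmod (u x))^2) * \<theta>' x) = q" "(LINT x|lborel. (v x)^2) = m"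
  using in_Xqm in_Xqm_iff by auto

lemma integral_energy_density_less:
  "(LINT x|lborel. energy_density \<alpha> \<beta> (cmod (u x)) (deriv (\<lambda>x. cmod (u x)) x) (\<theta>' x) (v x) (deriv v x)) < c"
  using low_energy energy_eq[of \<alpha> \<beta>] by simp

lemma potential_and_gradient_bounds:
  "(LINT x|lborel. (1 - (cmod (u x))^2)^2) \<le> 4 * K"
  "(LINT x|lborel. (deriv (\<lambda>x. cmod (u x)) x)^2) < 2 * K"
proof -
  note bounds = energy_bounds_potential_and_gradient[OF less_imp_le[OF \<alpha>_pos] \<beta>_nonneg,
      unfolded momentum_mass(2)]
  have "c + (\<alpha>/2) * m < K" unfolding K_def using c_less by simp
  then show "(LINT x|lborel. (1 - (cmod (u x))^2)^2) \<le> 4 * K"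
    "(LINT x|lborel. (deriv (\<lambda>x. cmod (u x)) x)^2) < 2 * K"
    using bounds integral_energy_density_less by linarith+
qed

lemma dip_at_origin: "s\<^sub>0 < 1 - cmod (u 0)"
proof -
  have "sqrt 2 * cmod (u 0) * q - \<alpha> * (1 - cmod (u 0)) * m < c"
    using energy_ge_momentum_bound[OF less_imp_le[OF \<alpha>_pos] \<beta>_nonneg norm_mono]
      integral_energy_density_less
    unfolding momentum_mass by simp
  then have "sqrt 2 * q - c < (1 - cmod (u 0)) * (sqrt 2 * q + \<alpha> * m)"
    by (simp add: algebra_simps)
  moreover have "0 < sqrt 2 * q + \<alpha> * m"
    using q_pos \<alpha>_pos m_nonneg by (simp add: add_pos_nonneg)
  ultimately show ?thesis
    unfolding s\<^sub>0_def by (simp add: divide_less_eq)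
qed

lemma L2norm_deriv_norm_gt: "sqrt (s\<^sub>0^4 / (16 * K)) < L2norm (deriv (\<lambda>x. cmod (u x)))"
proof -
  define t where "t = s\<^sub>0^2 / (8 * K)"
  have t: "0 < t" "t * (4 * K) = s\<^sub>0^2 / 2" "s\<^sub>0^2 / 2 * t = s\<^sub>0^4 / (16 * K)"
    unfolding t_def using s\<^sub>0_pos K_pos by (auto simp: field_simps power4_eq_xxxx power2_eq_square)
  define B where "B = (LINT x|lborel. (deriv (\<lambda>x. cmod (u x)) x)^2)"
  have "t * (LINT x|lborel. (1 - (cmod (u x))^2)^2) \<le> s\<^sub>0^2 / 2"
    using mult_left_mono[OF potential_and_gradient_bounds(1), of t] t by simp
  moreover have "s\<^sub>0^2 < (1 - cmod (u 0))^2"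
    using dip_at_origin s\<^sub>0_pos by (intro power_strict_mono) auto
  ultimately have "s\<^sub>0^2 / 2 < (1/t) * B"
    using dip_power2_le[OF t(1)] unfolding B_def by linarith
  then have "s\<^sub>0^4 / (16 * K) < B"
    using t by (simp add: field_simps)
  then show ?thesis
    unfolding L2norm_def B_def by simp
qed

lemma dip_near_origin:
  assumes "\<bar>x\<bar> \<le> r\<^sub>0"
  shows "s\<^sub>0 / 2 \<le> 1 - cmod (u x)"
proof -
  define t where "t = 4 * K / s\<^sub>0"
  have t: "0 < t" "t * r\<^sub>0 = s\<^sub>0 / 2" "(1/t) * (2 * K) = s\<^sub>0 / 2"
    unfolding t_def r\<^sub>0_def using s\<^sub>0_pos K_pos by (auto simp: field_simps power2_eq_square)
  have "(1/t) * (LINT x|lborel. (deriv (\<lambda>x. cmod (u x)) x)^2) \<le> (1/t) * (2 * K)"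
    using potential_and_gradient_bounds(2) t(1) by (intro mult_left_mono) auto
  then have "(t * r\<^sub>0 + (1/t) * (LINT x|lborel. (deriv (\<lambda>x. cmod (u x)) x)^2)) / 2 \<le> s\<^sub>0 / 2"
    using t(2,3) by argo
  then have "s\<^sub>0 / 2 \<le> 1 - cmod (u r\<^sub>0)"
    using dip_le_at[OF t(1) less_imp_le[OF r\<^sub>0_pos]] dip_at_origin by linarith
  also have "\<dots> \<le> 1 - cmod (u x)"
    using norm_mono[of x r\<^sub>0] assms r\<^sub>0_pos by simp
  finally show ?thesis .
qed

text \<open>Replacing \<open>v\<close> by a field \<open>w\<close> of the same mass that sits in the dip gains
  \<open>\<alpha> s\<^sub>0 r\<^sub>0 \<gamma> / 2\<close> of coupling energy, while the coupling energy of \<open>v\<close> is controlled by \<open>\<parallel>v\<parallel>\<^sub>4\<close>.\<close>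

lemma Emin_le_energy_replace_field:
  assumes w_deriv: "\<And>x. (w has_real_derivative w' x) (at x)" and w'_cont: "continuous_on UNIV w'"
    and w_support: "\<exists>R. \<forall>x. R < \<bar>x\<bar> \<longrightarrow> w x = 0 \<and> w' x = 0"
    and w_mass: "(LINT x|lborel. (w x)^2) = m"
    and \<gamma>: "0 < \<gamma>" "\<And>x. \<bar>x\<bar> \<le> r\<^sub>0 \<Longrightarrow> \<gamma> \<le> (w x)^2" and "0 < t"
  shows "Emin \<alpha> \<beta> q m \<le> ereal (energy \<alpha> \<beta> u v + (\<alpha>/4) * (4 * K * t + (LINT x|lborel. (v x)^4) / t)
    + ((1/2) * (LINT x|lborel. (w' x)^2) + (\<beta>/4) * (LINT x|lborel. (w x)^4)) - (\<alpha> * s\<^sub>0 / 2) * r\<^sub>0 * \<gamma>)"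
proof -
  interpret W: lifted_profile "\<lambda>x. cmod (u x)" "deriv (\<lambda>x. cmod (u x))" \<theta>' w w' \<theta> u
    using w_deriv w'_cont w_support by (rule replace_field)
  define V4 Cv Cw where "V4 = (LINT x|lborel. (v x)^4)"
    and "Cv = (LINT x|lborel. (1 - (cmod (u x))^2) * (v x)^2)" and "Cw = (LINT x|lborel. (1 - (cmod (u x))^2) * (w x)^2)"
  have "(s\<^sub>0/2 * \<gamma>) * (r\<^sub>0 - (-r\<^sub>0)) \<le> Cw"
    unfolding Cw_def
  proof (rule integral_ge_const_on_interval[OF W.integrable_profile_terms(4)])
    fix x assume "-r\<^sub>0 \<le> x" "x \<le> r\<^sub>0"
    then have "s\<^sub>0 / 2 \<le> 1 - cmod (u x)"
      using dip_near_origin[of x] by simp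
    then have "s\<^sub>0 / 2 \<le> 1 - (cmod (u x))^2"
      using one_minus_\<rho>_bounds(2)[of x] by linarith
    then show "s\<^sub>0/2 * \<gamma> \<le> (1 - (cmod (u x))^2) * (w x)^2"
      using \<gamma> \<open>-r\<^sub>0 \<le> x\<close> \<open>x \<le> r\<^sub>0\<close> s\<^sub>0_pos by (intro mult_mono) auto
  qed (use order_trans[OF one_minus_\<rho>_bounds(1,2)] \<gamma> s\<^sub>0_pos r\<^sub>0_pos in auto)
  then have gain: "(\<alpha> * s\<^sub>0 / 2) * r\<^sub>0 * \<gamma> \<le> (\<alpha>/2) * Cw"
    using mult_left_mono[of _ Cw "\<alpha>/2"] \<alpha>_pos by (simp add: algebra_simps)
  have "t * (LINT x|lborel. (1 - (cmod (u x))^2)^2) \<le> 4 * K * t"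
    using mult_left_mono[OF potential_and_gradient_bounds(1) less_imp_le[OF \<open>0 < t\<close>]]
    by (simp add: mult_ac)
  moreover have "(1/t) * V4 = V4 / t" by simp
  ultimately have "Cv \<le> (4 * K * t + V4 / t) / 2"
    using coupling_le[OF \<open>0 < t\<close>] unfolding Cv_def V4_def by argo
  then have coupling: "(\<alpha>/2) * Cv \<le> (\<alpha>/4) * (4 * K * t + V4 / t)"
    using mult_left_mono[of Cv _ "\<alpha>/2"] \<alpha>_pos by simp
  have "0 \<le> (1/2) * (LINT x|lborel. (deriv v x)^2) + (\<beta>/4) * V4"
    unfolding V4_def using \<beta>_nonneg by simp
  then have "energy \<alpha> \<beta> u w \<le> energy \<alpha> \<beta> u v + (\<alpha>/4) * (4 * K * t + V4 / t)
      + ((1/2) * (LINT x|lborel. (w' x)^2) + (\<beta>/4) * (LINT x|lborel. (w x)^4)) - (\<alpha> * s\<^sub>0 / 2) * r\<^sub>0 * \<gamma>"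
    using energy_eq[of \<alpha> \<beta>] W.energy_eq[of \<alpha> \<beta>]
      integral_energy_density_split[of \<alpha> \<beta>] W.integral_energy_density_split[of \<alpha> \<beta>]
      integral_energy_density_v[of \<alpha> \<beta>] W.integral_energy_density_v[of \<alpha> \<beta>] gain coupling
    unfolding Cv_def Cw_def V4_def by linarith
  moreover have "Emin \<alpha> \<beta> q m \<le> ereal (energy \<alpha> \<beta> u w)"
    unfolding Emin_def using W.in_Xqm_iff momentum_mass(1) w_mass by (intro INF_lower2[of "(u, w)"]) auto
  ultimately show ?thesis
    unfolding V4_def by (simp add: order_trans)
qed

end

lemma (in subcritical_energy) X0qm_low_energy_pair:
  assumes "(u, v) \<in> X0qm q m" and "energy \<alpha> \<beta> u v < c"
  obtains \<theta> \<theta>' where "low_energy_pair \<alpha> \<beta> q m c u v \<theta> \<theta>'"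
proof -
  obtain \<theta> \<theta>' where P: "lifted_profile (\<lambda>x. cmod (u x)) (deriv (\<lambda>x. cmod (u x))) \<theta>' v (deriv v) \<theta> u"
    and mono: "\<And>x y. \<bar>x\<bar> \<le> \<bar>y\<bar> \<Longrightarrow> cmod (u x) \<le> cmod (u y)"
    by (rule X0qm_lifted_profile[OF assms(1)]) (rule that)
  have "low_energy_pair \<alpha> \<beta> q m c u v \<theta> \<theta>'"
    using subcritical_energy_axioms P mono X0qm_subset_Xqm assms
    unfolding low_energy_pair_def low_energy_pair_axioms_def by blast
  then show ?thesis by (rule that)
qed

lemma (in subcritical_energy) Emin_le_energy_minus_gain:
  assumes "0 < m"
  obtains \<delta> g where "0 < \<delta>" "0 < g"
    "\<And>u v. (u, v) \<in> X0qm q m \<Longrightarrow> energy \<alpha> \<beta> u v < c \<Longrightarrow> L4norm v \<le> \<delta>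
      \<Longrightarrow> Emin \<alpha> \<beta> q m \<le> ereal (energy \<alpha> \<beta> u v - g)"
proof -
  define \<kappa> where "\<kappa> = \<alpha> * s\<^sub>0 / 4"
  have "0 < \<kappa>" unfolding \<kappa>_def using \<alpha>_pos s\<^sub>0_pos by simp
  obtain w w' \<gamma> where w: "\<And>x. (w has_real_derivative w' x) (at x)" "continuous_on UNIV w'"
    "\<exists>R. \<forall>x. R < \<bar>x\<bar> \<longrightarrow> w x = 0 \<and> w' x = 0" "(LINT x|lborel. (w x)^2) = m"
    and \<gamma>: "0 < \<gamma>" "\<And>x. \<bar>x\<bar> \<le> r\<^sub>0 \<Longrightarrow> \<gamma> \<le> (w x)^2"
    and cost: "(1/2) * (LINT x|lborel. (w' x)^2) + (\<beta>/4) * (LINT x|lborel. (w x)^4) \<le> \<kappa> * r\<^sub>0 * \<gamma>"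
    by (rule cheap_field_bounded_below_near_origin[OF assms \<beta>_nonneg \<open>0 < \<kappa>\<close> r\<^sub>0_pos]) (rule that)
  define g where "g = \<kappa> * r\<^sub>0 * \<gamma>"
  define t where "t = g / (4 * \<alpha> * K)"
  define \<delta> where "\<delta> = (g * t / \<alpha>) powr (1/4)"
  have g: "0 < g" unfolding g_def \<kappa>_def using \<alpha>_pos s\<^sub>0_pos r\<^sub>0_pos \<gamma> by simp
  have t: "0 < t" "(\<alpha>/4) * (4 * K * t) = g / 4" unfolding t_def using g \<alpha>_pos K_pos by auto
  have \<delta>: "0 < \<delta>" "\<delta>^4 = g * t / \<alpha>"
    unfolding \<delta>_def using g t \<alpha>_pos by (simp_all add: powr_quarter_power4)
  have "Emin \<alpha> \<beta> q m \<le> ereal (energy \<alpha> \<beta> u v - g / 2)"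
    if X0: "(u, v) \<in> X0qm q m" and low: "energy \<alpha> \<beta> u v < c" and small: "L4norm v \<le> \<delta>" for u v
  proof -
    have "0 \<le> L4norm v" unfolding L4norm_def by simp
    then have "(LINT x|lborel. (v x)^4) \<le> g * t / \<alpha>"
      using power_mono[OF small, of 4] L4norm_power4[of v] \<delta> by simp
    then have "(\<alpha>/4) * ((LINT x|lborel. (v x)^4) / t) \<le> g / 4"
      using t \<alpha>_pos by (simp add: field_simps)
    then have "(\<alpha>/4) * (4 * K * t + (LINT x|lborel. (v x)^4) / t) \<le> g / 2"
      using t(2) by (simp add: distrib_left)
    moreover have "(\<alpha> * s\<^sub>0 / 2) * r\<^sub>0 * \<gamma> = 2 * g"
      unfolding g_def \<kappa>_def by simp
    ultimately have "energy \<alpha> \<beta> u v + (\<alpha>/4) * (4 * K * t + (LINT x|lborel. (v x)^4) / t)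
        + ((1/2) * (LINT x|lborel. (w' x)^2) + (\<beta>/4) * (LINT x|lborel. (w x)^4)) - (\<alpha> * s\<^sub>0 / 2) * r\<^sub>0 * \<gamma>
        \<le> energy \<alpha> \<beta> u v - g / 2"
      using cost unfolding g_def by linarith
    moreover obtain \<theta> \<theta>' where L: "low_energy_pair \<alpha> \<beta> q m c u v \<theta> \<theta>'"
      using X0qm_low_energy_pair[OF X0 low] by metis
    ultimately show ?thesis
      using low_energy_pair.Emin_le_energy_replace_field[OF L w \<gamma> t(1)] by (simp add: order_trans)
  qed
  then show ?thesis using that[of \<delta> "g / 2"] \<delta> g by auto
qed

lemma (in subcritical_energy) eventually_L2norm_deriv_norm_gt:
  assumes X0: "\<And>n. (u n, v n) \<in> X0qm q m"
    and low: "\<forall>\<^sub>F n in sequentially. energy \<alpha> \<beta> (u n) (v n) < c"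
  shows "\<forall>\<^sub>F n in sequentially. sqrt (s\<^sub>0^4 / (16 * K)) < L2norm (deriv (\<lambda>x. cmod (u n x)))"
  using low
proof (rule eventually_mono)
  fix n assume "energy \<alpha> \<beta> (u n) (v n) < c"
  then obtain \<theta> \<theta>' where "low_energy_pair \<alpha> \<beta> q m c (u n) (v n) \<theta> \<theta>'"
    using X0qm_low_energy_pair[OF X0] by metis
  then show "sqrt (s\<^sub>0^4 / (16 * K)) < L2norm (deriv (\<lambda>x. cmod (u n x)))"
    by (rule low_energy_pair.L2norm_deriv_norm_gt)
qed

lemma (in subcritical_energy) eventually_L4norm_gt:
  assumes "0 < m" and X0: "\<And>n. (u n, v n) \<in> X0qm q m"
    and lim: "(\<lambda>n. ereal (energy \<alpha> \<beta> (u n) (v n))) \<longlonglongrightarrow> Emin \<alpha> \<beta> q m"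
    and below_c: "Emin \<alpha> \<beta> q m < ereal c"
  shows "\<exists>\<delta>>0. \<forall>\<^sub>F n in sequentially. \<delta> < L4norm (v n)"
proof -
  obtain \<delta> g where "0 < \<delta>" "0 < g" and gain: "\<And>u v. (u, v) \<in> X0qm q m \<Longrightarrow> energy \<alpha> \<beta> u v < c
      \<Longrightarrow> L4norm v \<le> \<delta> \<Longrightarrow> Emin \<alpha> \<beta> q m \<le> ereal (energy \<alpha> \<beta> u v - g)"
    using Emin_le_energy_minus_gain[OF \<open>0 < m\<close>] by metis
  have "ereal (- (\<alpha>/2) * m) \<le> Emin \<alpha> \<beta> q m"
    using X0qm_energy_ge[OF X0 less_imp_le[OF \<alpha>_pos] \<beta>_nonneg] by (intro tendsto_lowerbound[OF lim]) auto
  then obtain e where e: "Emin \<alpha> \<beta> q m = ereal e"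
    using below_c by (cases "Emin \<alpha> \<beta> q m") auto
  have "\<forall>\<^sub>F n in sequentially. energy \<alpha> \<beta> (u n) (v n) < c \<and> energy \<alpha> \<beta> (u n) (v n) < e + g"
    using order_tendstoD(2)[OF lim below_c] order_tendstoD(2)[OF lim, of "ereal (e + g)"] e \<open>0 < g\<close>
    by (auto elim: eventually_elim2)
  then have "\<forall>\<^sub>F n in sequentially. \<delta> < L4norm (v n)"
    by (rule eventually_mono) (use gain[OF X0] e in force)
  with \<open>0 < \<delta>\<close> show ?thesis by blast
qed

lemma (in subcritical_energy) eventually_norms_bounded_below:
  assumes X0: "\<And>n. (u n, v n) \<in> X0qm q m"
    and lim: "(\<lambda>n. ereal (energy \<alpha> \<beta> (u n) (v n))) \<longlonglongrightarrow> Emin \<alpha> \<beta> q m"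
    and below_c: "Emin \<alpha> \<beta> q m < ereal c"
  shows "\<exists>\<delta>>0. (\<forall>\<^sub>F n in sequentially. L2norm (deriv (\<lambda>x. cmod (u n x))) > \<delta>) \<and>
                (m > 0 \<longrightarrow> (\<forall>\<^sub>F n in sequentially. L4norm (v n) > \<delta>))"
proof -
  define \<delta>\<^sub>1 where "\<delta>\<^sub>1 = sqrt (s\<^sub>0^4 / (16 * K))"
  have "0 < \<delta>\<^sub>1" unfolding \<delta>\<^sub>1_def using s\<^sub>0_pos K_pos by simp
  have "\<forall>\<^sub>F n in sequentially. energy \<alpha> \<beta> (u n) (v n) < c"
    using order_tendstoD(2)[OF lim below_c] by simp
  then have L2: "\<forall>\<^sub>F n in sequentially. \<delta>\<^sub>1 < L2norm (deriv (\<lambda>x. cmod (u n x)))"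
    unfolding \<delta>\<^sub>1_def using X0 by (intro eventually_L2norm_deriv_norm_gt)
  show ?thesis
  proof (cases "0 < m")
    case True
    then obtain \<delta>\<^sub>2 where "0 < \<delta>\<^sub>2" and L4: "\<forall>\<^sub>F n in sequentially. \<delta>\<^sub>2 < L4norm (v n)"
      using eventually_L4norm_gt X0 lim below_c by blast
    have "\<forall>\<^sub>F n in sequentially. min \<delta>\<^sub>1 \<delta>\<^sub>2 < L2norm (deriv (\<lambda>x. cmod (u n x)))"
      using L2 by (rule eventually_mono) simp
    moreover have "\<forall>\<^sub>F n in sequentially. min \<delta>\<^sub>1 \<delta>\<^sub>2 < L4norm (v n)"
      using L4 by (rule eventually_mono) simp
    ultimately show ?thesis
      using \<open>0 < \<delta>\<^sub>1\<close> \<open>0 < \<delta>\<^sub>2\<close> by (intro exI[of _ "min \<delta>\<^sub>1 \<delta>\<^sub>2"]) simp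
  next
    case False
    then show ?thesis using L2 \<open>0 < \<delta>\<^sub>1\<close> by blast
  qed
qed

theorem lemma4p5:
  fixes \<alpha> \<beta> q m :: real
    and u :: "nat \<Rightarrow> real \<Rightarrow> complex" and v :: "nat \<Rightarrow> real \<Rightarrow> real"
  assumes "\<alpha> > 0" and "\<beta> \<ge> 0" and "0 < q" and "q < pi / 2" and "m \<ge> 0"
    and "\<And>n. (u n, v n) \<in> X0qm q m"
    and "(\<lambda>n. ereal (energy \<alpha> \<beta> (u n) (v n))) \<longlonglongrightarrow> Emin \<alpha> \<beta> q m"
  shows "\<exists>\<delta>>0. (\<forall>\<^sub>F n in sequentially. L2norm (deriv (\<lambda>x. cmod (u n x))) > \<delta>) \<and>
                (m > 0 \<longrightarrow> (\<forall>\<^sub>F n in sequentially. L4norm (v n) > \<delta>))"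
proof -
  have "Emin \<alpha> \<beta> q m < ereal (sqrt 2 * q)"
    using assms by (intro Emin_less_sqrt2_q) auto
  then obtain c where below_c: "Emin \<alpha> \<beta> q m < ereal c" and "ereal c < ereal (sqrt 2 * q)"
    by (meson ereal_dense2)
  interpret subcritical_energy \<alpha> \<beta> q m c
    using assms \<open>ereal c < ereal (sqrt 2 * q)\<close> by unfold_locales auto
  show ?thesis
    using eventually_norms_bounded_below[OF assms(6,7) below_c] .
qed

end
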